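(* Let $\mathcal{C}$ and $\mathcal{D}$ be $*$-categories. If $\mathcal{D}$ is a pre-Hilbert $*$-category, then $[\mathcal{C},\mathcal{D}]_*$ is also a pre-Hilbert $*$-category.
   Context: A $*$-category is a category with a choice of $f^*\colon Y\to X$ for each $f\colon X\to Y$ such that $1^*=1$, $(gf)^*=f^*g^*$, $(f^* )^*=f$; $f$ is an isometry if $f^*f=1$. A $*$-functor is a functor $F$ between $*$-categories with $F(f^* )=(Ff)^*$. $[\mathcal{C},\mathcal{D}]_*$ is the full subcategory of the functor category $[\mathcal{C},\mathcal{D}]$ on the $*$-functors, made into a $*$-category by the componentwise involution $(\sigma^* )_X=(\sigma_X)^*$ for natural transformations $\sigma$. A pre-Hilbert $*$-category is a $*$-category in which (R1) there is a zero object, (R2) every pair of objects has an orthonormal biproduct (a biproduct $(X,s_1,r_1,s_2,r_2)$ with $r_k=s_k^*$), (R3) every morphism has an isometric kernel (an equaliser with the zero morphism that is an isometry), and (R4) every diagonal $\Delta\colon X\to X\oplus X$ is a normal monomorphism (a kernel of some morphism). *)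

theory Defs
  imports Main
begin

text \<open>A category: objects, arrows, domain, codomain, identities and composition
  (c_comp g f means g after f).  A *-category additionally carries an involution.\<close>

record ('o, 'a) cat =
  c_obj  :: "'o set"
  c_arr  :: "'a set"
  c_dom  :: "'a \<Rightarrow> 'o"
  c_cod  :: "'a \<Rightarrow> 'o"
  c_id   :: "'o \<Rightarrow> 'a"
  c_comp :: "'a \<Rightarrow> 'a \<Rightarrow> 'a"

record ('o, 'a) star_cat = "('o, 'a) cat" +
  c_star :: "'a \<Rightarrow> 'a"

definition hom :: "('o, 'a, 'm) cat_scheme \<Rightarrow> 'o \<Rightarrow> 'o \<Rightarrow> 'a set" where
  "hom C X Y = {f \<in> c_arr C. c_dom C f = X \<and> c_cod C f = Y}"

definition category :: "('o, 'a, 'm) cat_scheme \<Rightarrow> bool" where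
  "category C \<longleftrightarrow>
     (\<forall>f \<in> c_arr C. c_dom C f \<in> c_obj C \<and> c_cod C f \<in> c_obj C) \<and>
     (\<forall>X \<in> c_obj C. c_id C X \<in> hom C X X) \<and>
     (\<forall>f g. f \<in> c_arr C \<longrightarrow> g \<in> c_arr C \<longrightarrow> c_cod C f = c_dom C g \<longrightarrow>
        c_comp C g f \<in> hom C (c_dom C f) (c_cod C g)) \<and>
     (\<forall>f \<in> c_arr C. c_comp C (c_id C (c_cod C f)) f = f \<and> c_comp C f (c_id C (c_dom C f)) = f) \<and>
     (\<forall>f g h. f \<in> c_arr C \<longrightarrow> g \<in> c_arr C \<longrightarrow> h \<in> c_arr C \<longrightarrow>
        c_cod C f = c_dom C g \<longrightarrow> c_cod C g = c_dom C h \<longrightarrow>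
        c_comp C h (c_comp C g f) = c_comp C (c_comp C h g) f)"

definition star_category :: "('o, 'a, 'm) star_cat_scheme \<Rightarrow> bool" where
  "star_category C \<longleftrightarrow> category C \<and>
     (\<forall>f \<in> c_arr C. c_star C f \<in> hom C (c_cod C f) (c_dom C f)) \<and>
     (\<forall>X \<in> c_obj C. c_star C (c_id C X) = c_id C X) \<and>
     (\<forall>f g. f \<in> c_arr C \<longrightarrow> g \<in> c_arr C \<longrightarrow> c_cod C f = c_dom C g \<longrightarrow>
        c_star C (c_comp C g f) = c_comp C (c_star C f) (c_star C g)) \<and>
     (\<forall>f \<in> c_arr C. c_star C (c_star C f) = f)"

definition isometry :: "('o, 'a, 'm) star_cat_scheme \<Rightarrow> 'a \<Rightarrow> bool" where
  "isometry C f \<longleftrightarrow> f \<in> c_arr C \<and> c_comp C (c_star C f) f = c_id C (c_dom C f)"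

text \<open>A functor is a pair (object map, arrow map); maps are extensional
  (undefined outside the objects/arrows of the source), so that functors are determined
  by their action on C.\<close>

type_synonym ('o1, 'a1, 'o2, 'a2) functr = "('o1 \<Rightarrow> 'o2) \<times> ('a1 \<Rightarrow> 'a2)"

definition is_functor ::
  "('o1, 'a1, 'm1) cat_scheme \<Rightarrow> ('o2, 'a2, 'm2) cat_scheme \<Rightarrow> ('o1, 'a1, 'o2, 'a2) functr \<Rightarrow> bool" where
  "is_functor C D F \<longleftrightarrow>
     (\<forall>X \<in> c_obj C. fst F X \<in> c_obj D \<and> snd F (c_id C X) = c_id D (fst F X)) \<and>
     (\<forall>f \<in> c_arr C. snd F f \<in> hom D (fst F (c_dom C f)) (fst F (c_cod C f))) \<and>
     (\<forall>f g. f \<in> c_arr C \<longrightarrow> g \<in> c_arr C \<longrightarrow> c_cod C f = c_dom C g \<longrightarrow>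
        snd F (c_comp C g f) = c_comp D (snd F g) (snd F f)) \<and>
     (\<forall>X. X \<notin> c_obj C \<longrightarrow> fst F X = undefined) \<and>
     (\<forall>f. f \<notin> c_arr C \<longrightarrow> snd F f = undefined)"

definition star_functor ::
  "('o1, 'a1, 'm1) star_cat_scheme \<Rightarrow> ('o2, 'a2, 'm2) star_cat_scheme \<Rightarrow> ('o1, 'a1, 'o2, 'a2) functr \<Rightarrow> bool" where
  "star_functor C D F \<longleftrightarrow> is_functor C D F \<and>
     (\<forall>f \<in> c_arr C. snd F (c_star C f) = c_star D (snd F f))"

definition nat_trans ::
  "('o1, 'a1, 'm1) cat_scheme \<Rightarrow> ('o2, 'a2, 'm2) cat_scheme \<Rightarrow>
   ('o1, 'a1, 'o2, 'a2) functr \<Rightarrow> ('o1, 'a1, 'o2, 'a2) functr \<Rightarrow> ('o1 \<Rightarrow> 'a2) \<Rightarrow> bool" where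
  "nat_trans C D F G \<sigma> \<longleftrightarrow> is_functor C D F \<and> is_functor C D G \<and>
     (\<forall>X \<in> c_obj C. \<sigma> X \<in> hom D (fst F X) (fst G X)) \<and>
     (\<forall>f \<in> c_arr C. c_comp D (\<sigma> (c_cod C f)) (snd F f) = c_comp D (snd G f) (\<sigma> (c_dom C f))) \<and>
     (\<forall>X. X \<notin> c_obj C \<longrightarrow> \<sigma> X = undefined)"

definition functor_star_cat ::
  "('o1, 'a1, 'm1) star_cat_scheme \<Rightarrow> ('o2, 'a2, 'm2) star_cat_scheme \<Rightarrow>
   (('o1, 'a1, 'o2, 'a2) functr,
    ('o1, 'a1, 'o2, 'a2) functr \<times> ('o1, 'a1, 'o2, 'a2) functr \<times> ('o1 \<Rightarrow> 'a2)) star_cat" where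
  "functor_star_cat C D = \<lparr>
     c_obj = {F. star_functor C D F},
     c_arr = {(F, G, \<sigma>). star_functor C D F \<and> star_functor C D G \<and> nat_trans C D F G \<sigma>},
     c_dom = (\<lambda>(F, G, \<sigma>). F),
     c_cod = (\<lambda>(F, G, \<sigma>). G),
     c_id = (\<lambda>F. (F, F, \<lambda>X. if X \<in> c_obj C then c_id D (fst F X) else undefined)),
     c_comp = (\<lambda>(G', H, \<tau>) (F, G, \<sigma>).
                 (F, H, \<lambda>X. if X \<in> c_obj C then c_comp D (\<tau> X) (\<sigma> X) else undefined)),
     c_star = (\<lambda>(F, G, \<sigma>). (G, F, \<lambda>X. if X \<in> c_obj C then c_star D (\<sigma> X) else undefined)) \<rparr>"

definition zero_obj :: "('o, 'a, 'm) cat_scheme \<Rightarrow> 'o \<Rightarrow> bool" where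
  "zero_obj C Z \<longleftrightarrow> Z \<in> c_obj C \<and>
     (\<forall>X \<in> c_obj C. (\<exists>!f. f \<in> hom C Z X) \<and> (\<exists>!f. f \<in> hom C X Z))"

definition zero_arr :: "('o, 'a, 'm) cat_scheme \<Rightarrow> 'a \<Rightarrow> bool" where
  "zero_arr C f \<longleftrightarrow> f \<in> c_arr C \<and>
     (\<exists>Z g h. zero_obj C Z \<and> g \<in> hom C (c_dom C f) Z \<and> h \<in> hom C Z (c_cod C f) \<and>
        f = c_comp C h g)"

definition biproduct :: "('o, 'a, 'm) cat_scheme \<Rightarrow> 'o \<Rightarrow> 'o \<Rightarrow> 'o \<Rightarrow> 'a \<Rightarrow> 'a \<Rightarrow> 'a \<Rightarrow> 'a \<Rightarrow> bool" where
  "biproduct C X1 X2 X s1 r1 s2 r2 \<longleftrightarrow>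
     s1 \<in> hom C X1 X \<and> r1 \<in> hom C X X1 \<and> s2 \<in> hom C X2 X \<and> r2 \<in> hom C X X2 \<and>
     c_comp C r1 s1 = c_id C X1 \<and> c_comp C r2 s2 = c_id C X2 \<and>
     zero_arr C (c_comp C r2 s1) \<and> zero_arr C (c_comp C r1 s2) \<and>
     (\<forall>W f1 f2. f1 \<in> hom C W X1 \<longrightarrow> f2 \<in> hom C W X2 \<longrightarrow>
        (\<exists>!h. h \<in> hom C W X \<and> c_comp C r1 h = f1 \<and> c_comp C r2 h = f2)) \<and>
     (\<forall>W g1 g2. g1 \<in> hom C X1 W \<longrightarrow> g2 \<in> hom C X2 W \<longrightarrow>
        (\<exists>!h. h \<in> hom C X W \<and> c_comp C h s1 = g1 \<and> c_comp C h s2 = g2))"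

definition orthonormal_biproduct ::
  "('o, 'a, 'm) star_cat_scheme \<Rightarrow> 'o \<Rightarrow> 'o \<Rightarrow> 'o \<Rightarrow> 'a \<Rightarrow> 'a \<Rightarrow> 'a \<Rightarrow> 'a \<Rightarrow> bool" where
  "orthonormal_biproduct C X1 X2 X s1 r1 s2 r2 \<longleftrightarrow>
     biproduct C X1 X2 X s1 r1 s2 r2 \<and> r1 = c_star C s1 \<and> r2 = c_star C s2"

definition is_kernel :: "('o, 'a, 'm) cat_scheme \<Rightarrow> 'a \<Rightarrow> 'a \<Rightarrow> bool" where
  "is_kernel C f k \<longleftrightarrow> f \<in> c_arr C \<and> k \<in> c_arr C \<and> c_cod C k = c_dom C f \<and>
     zero_arr C (c_comp C f k) \<and>
     (\<forall>g. g \<in> c_arr C \<longrightarrow> c_cod C g = c_dom C f \<longrightarrow> zero_arr C (c_comp C f g) \<longrightarrow>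
        (\<exists>!h. h \<in> hom C (c_dom C g) (c_dom C k) \<and> c_comp C k h = g))"

definition normal_mono :: "('o, 'a, 'm) cat_scheme \<Rightarrow> 'a \<Rightarrow> bool" where
  "normal_mono C m \<longleftrightarrow> (\<exists>f. is_kernel C f m)"

definition pre_hilbert :: "('o, 'a, 'm) star_cat_scheme \<Rightarrow> bool" where
  "pre_hilbert C \<longleftrightarrow> star_category C \<and>
     \<comment> \<open>(R1)\<close>
     (\<exists>Z. zero_obj C Z) \<and>
     \<comment> \<open>(R2)\<close>
     (\<forall>X1 \<in> c_obj C. \<forall>X2 \<in> c_obj C. \<exists>X s1 r1 s2 r2. orthonormal_biproduct C X1 X2 X s1 r1 s2 r2) \<and>
     \<comment> \<open>(R3)\<close>
     (\<forall>f \<in> c_arr C. \<exists>k. is_kernel C f k \<and> isometry C k) \<and>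
     \<comment> \<open>(R4): the diagonal of every orthonormal biproduct X (+) X\<close>
     (\<forall>X \<in> c_obj C. \<forall>P s1 r1 s2 r2 d.
        orthonormal_biproduct C X X P s1 r1 s2 r2 \<longrightarrow> d \<in> hom C X P \<longrightarrow>
        c_comp C r1 d = c_id C X \<longrightarrow> c_comp C r2 d = c_id C X \<longrightarrow> normal_mono C d)"

end

theory Submission
  imports Defs "HOL-Library.FuncSet"
begin

text \<open>Everything in \<open>[C,D]\<^sub>*\<close> is computed pointwise. The constant functor at a zero
  object of \<open>D\<close> is a zero object, so a natural transformation is zero iff its components are.
  Pointwise isometric kernels \<open>k\<^sub>X\<close> of \<open>\<sigma>\<close> assemble into a subfunctor \<open>X \<mapsto> dom k\<^sub>X\<close> with
  action \<open>k\<^sub>Y\<^sup>* \<circ> F f \<circ> k\<^sub>X\<close>, and pointwise orthonormal biproducts into a functor with action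
  \<open>F f \<oplus> G f\<close>; the universal properties lift because pointwise factorisations are unique,
  hence natural. For (R4), a biproduct \<open>F \<oplus> F\<close> in \<open>[C,D]\<^sub>*\<close> is isomorphic to the pointwise
  one, so each component \<open>d\<^sub>X\<close> of a diagonal is, up to isomorphism, a diagonal in \<open>D\<close> and hence
  a normal monomorphism. Then \<open>d\<^sub>X\<close> is the kernel of \<open>k\<^sub>X\<^sup>*\<close> for a kernel \<open>k\<close> of \<open>d\<^sup>*\<close>, and
  these pointwise kernels lift to \<open>[C,D]\<^sub>*\<close>.\<close>

definition jointly_monic :: "('o, 'a, 'm) cat_scheme \<Rightarrow> 'o \<Rightarrow> 'a \<Rightarrow> 'a \<Rightarrow> bool" where
  "jointly_monic C K m1 m2 \<longleftrightarrow>
     (\<forall>V a b. a \<in> hom C V K \<longrightarrow> b \<in> hom C V K \<longrightarrow>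
        c_comp C m1 a = c_comp C m1 b \<longrightarrow> c_comp C m2 a = c_comp C m2 b \<longrightarrow> a = b)"

definition biproduct_map ::
  "('o, 'a, 'm) cat_scheme \<Rightarrow> 'o \<Rightarrow> 'a \<Rightarrow> 'a \<Rightarrow> 'o \<Rightarrow> 'a \<Rightarrow> 'a \<Rightarrow> 'a \<Rightarrow> 'a \<Rightarrow> 'a" where
  "biproduct_map C P r1 r2 Q q1 q2 a b =
     (THE h. h \<in> hom C P Q \<and> c_comp C q1 h = c_comp C a r1 \<and> c_comp C q2 h = c_comp C b r2)"

locale category_locale =
  fixes C :: "('o, 'a, 'm) cat_scheme"
  assumes category: "category C"
begin

lemma hom_arr: "f \<in> hom C X Y \<Longrightarrow> f \<in> c_arr C"
  and hom_dom: "f \<in> hom C X Y \<Longrightarrow> c_dom C f = X"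
  and hom_cod: "f \<in> hom C X Y \<Longrightarrow> c_cod C f = Y"
  and arr_hom: "f \<in> c_arr C \<Longrightarrow> f \<in> hom C (c_dom C f) (c_cod C f)"
  by (simp_all add: hom_def)

lemma hom_dom_obj: "f \<in> hom C X Y \<Longrightarrow> X \<in> c_obj C"
  and hom_cod_obj: "f \<in> hom C X Y \<Longrightarrow> Y \<in> c_obj C"
  using category unfolding category_def hom_def by auto

lemma id_hom: "X \<in> c_obj C \<Longrightarrow> c_id C X \<in> hom C X X"
  using category unfolding category_def by auto

lemma comp_hom: "f \<in> hom C X Y \<Longrightarrow> g \<in> hom C Y Z \<Longrightarrow> c_comp C g f \<in> hom C X Z"
  using category unfolding category_def hom_def by auto

lemma id_comp: "f \<in> hom C X Y \<Longrightarrow> c_comp C (c_id C Y) f = f"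
  and comp_id: "f \<in> hom C X Y \<Longrightarrow> c_comp C f (c_id C X) = f"
  using category unfolding category_def hom_def by auto

lemma comp_assoc: "f \<in> hom C X Y \<Longrightarrow> g \<in> hom C Y Z \<Longrightarrow> h \<in> hom C Z W \<Longrightarrow>
    c_comp C (c_comp C h g) f = c_comp C h (c_comp C g f)"
  using category unfolding category_def hom_def by auto

lemma jointly_monicD:
  "jointly_monic C K m1 m2 \<Longrightarrow> a \<in> hom C V K \<Longrightarrow> b \<in> hom C V K \<Longrightarrow>
    c_comp C m1 a = c_comp C m1 b \<Longrightarrow> c_comp C m2 a = c_comp C m2 b \<Longrightarrow> a = b"
  unfolding jointly_monic_def by blast

section \<open>Zero morphisms and kernels\<close>

lemma zero_obj_obj: "zero_obj C Z \<Longrightarrow> Z \<in> c_obj C"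
  unfolding zero_obj_def by blast

lemma zero_obj_from: "zero_obj C Z \<Longrightarrow> X \<in> c_obj C \<Longrightarrow> \<exists>f. f \<in> hom C Z X"
  and zero_obj_to: "zero_obj C Z \<Longrightarrow> X \<in> c_obj C \<Longrightarrow> \<exists>f. f \<in> hom C X Z"
  unfolding zero_obj_def by blast+

lemma zero_obj_from_unique: "zero_obj C Z \<Longrightarrow> f \<in> hom C Z X \<Longrightarrow> g \<in> hom C Z X \<Longrightarrow> f = g"
  and zero_obj_to_unique: "zero_obj C Z \<Longrightarrow> f \<in> hom C X Z \<Longrightarrow> g \<in> hom C X Z \<Longrightarrow> f = g"
  unfolding zero_obj_def using hom_cod_obj hom_dom_obj by blast+

lemma zero_arrI:
  assumes "zero_obj C Z" "g \<in> hom C X Z" "h \<in> hom C Z Y"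
  shows "zero_arr C (c_comp C h g)"
proof -
  have "c_comp C h g \<in> hom C X Y" using comp_hom assms(2,3) .
  then show ?thesis unfolding zero_arr_def using assms by (auto simp: hom_def)
qed

lemma zero_arr_factor:
  assumes f: "zero_arr C f" "f \<in> hom C X Y" and Z: "zero_obj C Z"
  obtains g h where "g \<in> hom C X Z" "h \<in> hom C Z Y" "f = c_comp C h g"
proof -
  obtain Z' g h where Z': "zero_obj C Z'" and g: "g \<in> hom C X Z'" and h: "h \<in> hom C Z' Y"
    and fgh: "f = c_comp C h g"
    using f unfolding zero_arr_def hom_def by blast
  obtain u where u: "u \<in> hom C Z' Z" using zero_obj_to[OF Z zero_obj_obj[OF Z']] by blast
  obtain v where v: "v \<in> hom C Z Z'" using zero_obj_to[OF Z' zero_obj_obj[OF Z]] by blast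
  have "c_comp C v u = c_id C Z'"
    using zero_obj_from_unique[OF Z' comp_hom[OF u v] id_hom[OF zero_obj_obj[OF Z']]] .
  then have "f = c_comp C h (c_comp C (c_comp C v u) g)"
    using fgh id_comp[OF g] by simp
  also have "\<dots> = c_comp C (c_comp C h v) (c_comp C u g)"
    using comp_assoc[OF g u v] comp_assoc[OF comp_hom[OF g u] v h] by simp
  finally show thesis using that comp_hom[OF g u] comp_hom[OF v h] by blast
qed

lemma zero_arr_unique:
  assumes "zero_arr C f" "zero_arr C g" "f \<in> hom C X Y" "g \<in> hom C X Y"
  shows "f = g"
proof -
  obtain Z where Z: "zero_obj C Z" using assms(1) unfolding zero_arr_def by blast
  obtain g1 h1 where 1: "g1 \<in> hom C X Z" "h1 \<in> hom C Z Y" "f = c_comp C h1 g1"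
    using zero_arr_factor[OF assms(1,3) Z] .
  obtain g2 h2 where 2: "g2 \<in> hom C X Z" "h2 \<in> hom C Z Y" "g = c_comp C h2 g2"
    using zero_arr_factor[OF assms(2,4) Z] .
  show ?thesis
    using 1 2 zero_obj_to_unique[OF Z 1(1) 2(1)] zero_obj_from_unique[OF Z 1(2) 2(2)] by simp
qed

lemma zero_arr_postcomp:
  assumes "zero_arr C f" "f \<in> hom C X Y" "g \<in> hom C Y W"
  shows "zero_arr C (c_comp C g f)"
proof -
  obtain Z where Z: "zero_obj C Z" using assms(1) unfolding zero_arr_def by blast
  obtain u v where u: "u \<in> hom C X Z" and v: "v \<in> hom C Z Y" and f: "f = c_comp C v u"
    using zero_arr_factor[OF assms(1,2) Z] .
  show ?thesis
    using zero_arrI[OF Z u comp_hom[OF v assms(3)]] comp_assoc[OF u v assms(3)] f by simp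
qed

lemma zero_arr_precomp:
  assumes "zero_arr C f" "f \<in> hom C X Y" "g \<in> hom C V X"
  shows "zero_arr C (c_comp C f g)"
proof -
  obtain Z where Z: "zero_obj C Z" using assms(1) unfolding zero_arr_def by blast
  obtain u v where u: "u \<in> hom C X Z" and v: "v \<in> hom C Z Y" and f: "f = c_comp C v u"
    using zero_arr_factor[OF assms(1,2) Z] .
  show ?thesis
    using zero_arrI[OF Z comp_hom[OF assms(3) u] v] comp_assoc[OF assms(3) u v] f by simp
qed

lemma kernel_hom: "is_kernel C f k \<Longrightarrow> f \<in> hom C A B \<Longrightarrow> k \<in> hom C (c_dom C k) A"
  unfolding is_kernel_def hom_def by auto

lemma kernel_factor:
  assumes k: "is_kernel C f k" and f: "f \<in> hom C A B"
    and g: "g \<in> hom C W A" and z: "zero_arr C (c_comp C f g)"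
  shows "\<exists>!h. h \<in> hom C W (c_dom C k) \<and> c_comp C k h = g"
proof -
  have "g \<in> c_arr C" "c_cod C g = c_dom C f" "c_dom C g = W"
    using g f by (simp_all add: hom_def)
  moreover have "\<forall>g. g \<in> c_arr C \<longrightarrow> c_cod C g = c_dom C f \<longrightarrow> zero_arr C (c_comp C f g) \<longrightarrow>
      (\<exists>!h. h \<in> hom C (c_dom C g) (c_dom C k) \<and> c_comp C k h = g)"
    using k unfolding is_kernel_def by (elim conjE)
  ultimately show ?thesis using z by metis
qed

lemma kernel_jointly_monic:
  assumes k: "is_kernel C f k" and f: "f \<in> hom C A B"
  shows "jointly_monic C (c_dom C k) k k"
  unfolding jointly_monic_def
proof (intro allI impI)
  fix V a b assume a: "a \<in> hom C V (c_dom C k)" and b: "b \<in> hom C V (c_dom C k)"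
    and e: "c_comp C k a = c_comp C k b"
  have kh: "k \<in> hom C (c_dom C k) A" using kernel_hom[OF k f] .
  have "zero_arr C (c_comp C f k)" using k unfolding is_kernel_def by blast
  then have "zero_arr C (c_comp C f (c_comp C k a))"
    using zero_arr_precomp[OF _ comp_hom[OF kh f] a] by (simp add: comp_assoc[OF a kh f])
  from kernel_factor[OF k f comp_hom[OF a kh] this] show "a = b" using a b e by metis
qed


lemma normal_mono_iso_comp:
  assumes m: "normal_mono C m" "m \<in> hom C K Q"
    and \<phi>: "\<phi> \<in> hom C P Q" and \<psi>: "\<psi> \<in> hom C Q P"
    and \<psi>\<phi>: "c_comp C \<psi> \<phi> = c_id C P" and \<phi>\<psi>: "c_comp C \<phi> \<psi> = c_id C Q"
  shows "normal_mono C (c_comp C \<psi> m)"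
proof -
  obtain f where k: "is_kernel C f m" using m(1) unfolding normal_mono_def by blast
  have f: "f \<in> hom C Q (c_cod C f)"
    using k m(2) unfolding is_kernel_def by (auto simp: hom_def)
  have dm: "c_dom C m = K" using hom_dom[OF m(2)] .
  have f\<phi>: "c_comp C f \<phi> \<in> hom C P (c_cod C f)" and \<psi>m: "c_comp C \<psi> m \<in> hom C K P"
    using comp_hom \<phi> f m(2) \<psi> by blast+
  have "c_comp C (c_comp C f \<phi>) (c_comp C \<psi> m) = c_comp C f (c_comp C (c_comp C \<phi> \<psi>) m)"
    using comp_assoc[OF m(2) \<psi> \<phi>] comp_assoc[OF \<psi>m \<phi> f] by simp
  then have zero: "zero_arr C (c_comp C (c_comp C f \<phi>) (c_comp C \<psi> m))"
    using k \<phi>\<psi> id_comp[OF m(2)] unfolding is_kernel_def by simp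
  have univ: "\<exists>!h. h \<in> hom C (c_dom C g) (c_dom C (c_comp C \<psi> m)) \<and> c_comp C (c_comp C \<psi> m) h = g"
    if g: "g \<in> c_arr C" "c_cod C g = c_dom C (c_comp C f \<phi>)"
      and z: "zero_arr C (c_comp C (c_comp C f \<phi>) g)" for g
  proof -
    define W where "W = c_dom C g"
    have gh: "g \<in> hom C W P" using g hom_dom[OF f\<phi>] by (simp add: hom_def W_def)
    have "zero_arr C (c_comp C f (c_comp C \<phi> g))" using z comp_assoc[OF gh \<phi> f] by simp
    from kernel_factor[OF k f comp_hom[OF gh \<phi>] this]
    have ex: "\<exists>!h. h \<in> hom C W K \<and> c_comp C m h = c_comp C \<phi> g" by (simp add: dm)
    have iff: "c_comp C (c_comp C \<psi> m) h = g \<longleftrightarrow> c_comp C m h = c_comp C \<phi> g"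
      if h: "h \<in> hom C W K" for h
    proof
      assume "c_comp C (c_comp C \<psi> m) h = g"
      then show "c_comp C m h = c_comp C \<phi> g"
        using comp_assoc[OF h m(2) \<psi>] comp_assoc[OF comp_hom[OF h m(2)] \<psi> \<phi>] \<phi>\<psi>
          id_comp[OF comp_hom[OF h m(2)]] by simp
    next
      assume "c_comp C m h = c_comp C \<phi> g"
      then show "c_comp C (c_comp C \<psi> m) h = g"
        using comp_assoc[OF h m(2) \<psi>] comp_assoc[OF gh \<phi> \<psi>] \<psi>\<phi> id_comp[OF gh] by simp
    qed
    show ?thesis using ex iff hom_dom[OF \<psi>m] unfolding W_def[symmetric] by metis
  qed
  have "is_kernel C (c_comp C f \<phi>) (c_comp C \<psi> m)"
    unfolding is_kernel_def
    using hom_arr[OF f\<phi>] hom_arr[OF \<psi>m] hom_cod[OF \<psi>m] hom_dom[OF f\<phi>] zero univ by simp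
  then show ?thesis unfolding normal_mono_def by blast
qed

section \<open>Biproducts\<close>

lemma biproductD:
  assumes "biproduct C X1 X2 P s1 r1 s2 r2"
  shows "s1 \<in> hom C X1 P" "r1 \<in> hom C P X1" "s2 \<in> hom C X2 P" "r2 \<in> hom C P X2"
    "c_comp C r1 s1 = c_id C X1" "c_comp C r2 s2 = c_id C X2"
    "zero_arr C (c_comp C r2 s1)" "zero_arr C (c_comp C r1 s2)"
  using assms unfolding biproduct_def by blast+

lemma biproduct_pairing:
  assumes "biproduct C X1 X2 P s1 r1 s2 r2" "f1 \<in> hom C W X1" "f2 \<in> hom C W X2"
  shows "\<exists>!h. h \<in> hom C W P \<and> c_comp C r1 h = f1 \<and> c_comp C r2 h = f2"
  using assms unfolding biproduct_def by blast

lemma biproduct_copairing: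
  assumes "biproduct C X1 X2 P s1 r1 s2 r2" "g1 \<in> hom C X1 W" "g2 \<in> hom C X2 W"
  shows "\<exists>!h. h \<in> hom C P W \<and> c_comp C h s1 = g1 \<and> c_comp C h s2 = g2"
  using assms unfolding biproduct_def by blast

lemma biproduct_swap:
  assumes P: "biproduct C X1 X2 P s1 r1 s2 r2"
  shows "biproduct C X2 X1 P s2 r2 s1 r1"
proof -
  have "\<exists>!h. h \<in> hom C W P \<and> c_comp C r2 h = f1 \<and> c_comp C r1 h = f2"
    if "f1 \<in> hom C W X2" "f2 \<in> hom C W X1" for W f1 f2
    using biproduct_pairing[OF P that(2,1)] by (simp only: conj_ac)
  moreover have "\<exists>!h. h \<in> hom C P W \<and> c_comp C h s2 = g1 \<and> c_comp C h s1 = g2"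
    if "g1 \<in> hom C X2 W" "g2 \<in> hom C X1 W" for W g1 g2
    using biproduct_copairing[OF P that(2,1)] by (simp only: conj_ac)
  ultimately show ?thesis using biproductD[OF P] unfolding biproduct_def by simp
qed

lemma biproduct_jointly_monic:
  assumes P: "biproduct C X1 X2 P s1 r1 s2 r2"
  shows "jointly_monic C P r1 r2"
  unfolding jointly_monic_def
proof (intro allI impI)
  fix V a b assume a: "a \<in> hom C V P" and b: "b \<in> hom C V P"
    and e: "c_comp C r1 a = c_comp C r1 b" "c_comp C r2 a = c_comp C r2 b"
  from biproduct_pairing[OF P comp_hom[OF a biproductD(2)[OF P]] comp_hom[OF a biproductD(4)[OF P]]]
  show "a = b" using a b e by metis
qed

lemma biproduct_map:
  assumes P: "biproduct C X1 X2 P s1 r1 s2 r2" and Q: "biproduct C Y1 Y2 Q t1 q1 t2 q2"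
    and a: "a \<in> hom C X1 Y1" and b: "b \<in> hom C X2 Y2"
  shows "biproduct_map C P r1 r2 Q q1 q2 a b \<in> hom C P Q"
    and "c_comp C q1 (biproduct_map C P r1 r2 Q q1 q2 a b) = c_comp C a r1"
    and "c_comp C q2 (biproduct_map C P r1 r2 Q q1 q2 a b) = c_comp C b r2"
proof -
  have "\<exists>!h. h \<in> hom C P Q \<and> c_comp C q1 h = c_comp C a r1 \<and> c_comp C q2 h = c_comp C b r2"
    using biproduct_pairing[OF Q comp_hom[OF biproductD(2)[OF P] a] comp_hom[OF biproductD(4)[OF P] b]] .
  then have "biproduct_map C P r1 r2 Q q1 q2 a b \<in> hom C P Q \<and>
      c_comp C q1 (biproduct_map C P r1 r2 Q q1 q2 a b) = c_comp C a r1 \<and>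
      c_comp C q2 (biproduct_map C P r1 r2 Q q1 q2 a b) = c_comp C b r2"
    unfolding biproduct_map_def by (rule theI')
  then show "biproduct_map C P r1 r2 Q q1 q2 a b \<in> hom C P Q"
    and "c_comp C q1 (biproduct_map C P r1 r2 Q q1 q2 a b) = c_comp C a r1"
    and "c_comp C q2 (biproduct_map C P r1 r2 Q q1 q2 a b) = c_comp C b r2"
    by blast+
qed

lemma biproduct_map_unique:
  assumes P: "biproduct C X1 X2 P s1 r1 s2 r2" and Q: "biproduct C Y1 Y2 Q t1 q1 t2 q2"
    and a: "a \<in> hom C X1 Y1" and b: "b \<in> hom C X2 Y2"
    and h: "h \<in> hom C P Q" "c_comp C q1 h = c_comp C a r1" "c_comp C q2 h = c_comp C b r2"
  shows "h = biproduct_map C P r1 r2 Q q1 q2 a b"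
  using jointly_monicD[OF biproduct_jointly_monic[OF Q] h(1) biproduct_map(1)[OF P Q a b]]
    h(2,3) biproduct_map(2,3)[OF P Q a b] by simp

lemma biproduct_map_swap:
  "biproduct_map C P r2 r1 Q q2 q1 b a = biproduct_map C P r1 r2 Q q1 q2 a b"
  unfolding biproduct_map_def by (simp only: conj_ac)

lemma biproduct_map_id:
  assumes P: "biproduct C X1 X2 P s1 r1 s2 r2"
  shows "biproduct_map C P r1 r2 P r1 r2 (c_id C X1) (c_id C X2) = c_id C P"
proof -
  note Ph = biproductD[OF P]
  have "P \<in> c_obj C" using hom_cod_obj[OF Ph(1)] .
  then show ?thesis
    using biproduct_map_unique[OF P P id_hom[OF hom_dom_obj[OF Ph(1)]] id_hom[OF hom_dom_obj[OF Ph(3)]]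
        id_hom] comp_id[OF Ph(2)] comp_id[OF Ph(4)] id_comp[OF Ph(2)] id_comp[OF Ph(4)]
    by simp
qed

lemma biproduct_map_comp:
  assumes P: "biproduct C X1 X2 P s1 r1 s2 r2" and Q: "biproduct C Y1 Y2 Q t1 q1 t2 q2"
    and R: "biproduct C Z1 Z2 R u1 p1 u2 p2"
    and a: "a \<in> hom C X1 Y1" and b: "b \<in> hom C X2 Y2"
    and a': "a' \<in> hom C Y1 Z1" and b': "b' \<in> hom C Y2 Z2"
  shows "c_comp C (biproduct_map C Q q1 q2 R p1 p2 a' b') (biproduct_map C P r1 r2 Q q1 q2 a b)
    = biproduct_map C P r1 r2 R p1 p2 (c_comp C a' a) (c_comp C b' b)"
proof (rule biproduct_map_unique[OF P R comp_hom[OF a a'] comp_hom[OF b b']])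
  note m = biproduct_map[OF P Q a b] and m' = biproduct_map[OF Q R a' b']
  note Ph = biproductD[OF P] and Qh = biproductD[OF Q] and Rh = biproductD[OF R]
  show "c_comp C (biproduct_map C Q q1 q2 R p1 p2 a' b') (biproduct_map C P r1 r2 Q q1 q2 a b) \<in> hom C P R"
    using comp_hom[OF m(1) m'(1)] .
  show "c_comp C p1 (c_comp C (biproduct_map C Q q1 q2 R p1 p2 a' b') (biproduct_map C P r1 r2 Q q1 q2 a b))
      = c_comp C (c_comp C a' a) r1"
    using comp_assoc[OF m(1) m'(1) Rh(2)] m'(2) comp_assoc[OF m(1) Qh(2) a'] m(2)
      comp_assoc[OF Ph(2) a a'] by simp
  show "c_comp C p2 (c_comp C (biproduct_map C Q q1 q2 R p1 p2 a' b') (biproduct_map C P r1 r2 Q q1 q2 a b))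
      = c_comp C (c_comp C b' b) r2"
    using comp_assoc[OF m(1) m'(1) Rh(4)] m'(3) comp_assoc[OF m(1) Qh(4) b'] m(3)
      comp_assoc[OF Ph(4) b b'] by simp
qed

lemma biproduct_map_inj1:
  assumes P: "biproduct C X1 X2 P s1 r1 s2 r2" and Q: "biproduct C Y1 Y2 Q t1 q1 t2 q2"
    and a: "a \<in> hom C X1 Y1" and b: "b \<in> hom C X2 Y2"
  shows "c_comp C (biproduct_map C P r1 r2 Q q1 q2 a b) s1 = c_comp C t1 a"
proof -
  note m = biproduct_map[OF P Q a b] and Ph = biproductD[OF P] and Qh = biproductD[OF Q]
  let ?m = "biproduct_map C P r1 r2 Q q1 q2 a b"
  have "c_comp C q1 (c_comp C ?m s1) = c_comp C q1 (c_comp C t1 a)"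
    using comp_assoc[OF Ph(1) m(1) Qh(2)] m(2) comp_assoc[OF Ph(1) Ph(2) a] Ph(5) comp_id[OF a]
      comp_assoc[OF a Qh(1) Qh(2)] Qh(5) id_comp[OF a] by simp
  moreover have "c_comp C q2 (c_comp C ?m s1) = c_comp C q2 (c_comp C t1 a)"
  proof (rule zero_arr_unique)
    show "zero_arr C (c_comp C q2 (c_comp C ?m s1))"
      using comp_assoc[OF Ph(1) m(1) Qh(4)] m(3) comp_assoc[OF Ph(1) Ph(4) b]
        zero_arr_postcomp[OF Ph(7) comp_hom[OF Ph(1) Ph(4)] b] by simp
    show "zero_arr C (c_comp C q2 (c_comp C t1 a))"
      using comp_assoc[OF a Qh(1) Qh(4)] zero_arr_precomp[OF Qh(7) comp_hom[OF Qh(1) Qh(4)] a] by simp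
    show "c_comp C q2 (c_comp C ?m s1) \<in> hom C X1 Y2"
      using comp_hom[OF comp_hom[OF Ph(1) m(1)] Qh(4)] .
    show "c_comp C q2 (c_comp C t1 a) \<in> hom C X1 Y2"
      using comp_hom[OF comp_hom[OF a Qh(1)] Qh(4)] .
  qed
  ultimately show ?thesis
    using jointly_monicD[OF biproduct_jointly_monic[OF Q] comp_hom[OF Ph(1) m(1)] comp_hom[OF a Qh(1)]]
    by blast
qed

lemma biproduct_map_inj2:
  assumes P: "biproduct C X1 X2 P s1 r1 s2 r2" and Q: "biproduct C Y1 Y2 Q t1 q1 t2 q2"
    and a: "a \<in> hom C X1 Y1" and b: "b \<in> hom C X2 Y2"
  shows "c_comp C (biproduct_map C P r1 r2 Q q1 q2 a b) s2 = c_comp C t2 b"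
  using biproduct_map_inj1[OF biproduct_swap[OF P] biproduct_swap[OF Q] b a]
  by (simp add: biproduct_map_swap)

lemma biproduct_iso:
  assumes P: "biproduct C X1 X2 P s1 r1 s2 r2" and Q: "biproduct C X1 X2 Q t1 q1 t2 q2"
  obtains \<phi> \<psi> where "\<phi> \<in> hom C P Q" "\<psi> \<in> hom C Q P"
    "c_comp C \<psi> \<phi> = c_id C P" "c_comp C \<phi> \<psi> = c_id C Q"
    "c_comp C q1 \<phi> = r1" "c_comp C q2 \<phi> = r2"
proof
  note Ph = biproductD[OF P]
  have X: "X1 \<in> c_obj C" "X2 \<in> c_obj C" using hom_dom_obj Ph(1,3) by blast+
  note i = id_hom[OF X(1)] id_hom[OF X(2)]
  let ?\<phi> = "biproduct_map C P r1 r2 Q q1 q2 (c_id C X1) (c_id C X2)"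
  let ?\<psi> = "biproduct_map C Q q1 q2 P r1 r2 (c_id C X1) (c_id C X2)"
  show "?\<phi> \<in> hom C P Q" "c_comp C q1 ?\<phi> = r1" "c_comp C q2 ?\<phi> = r2"
    using biproduct_map[OF P Q i] id_comp Ph(2,4) by simp_all
  show "?\<psi> \<in> hom C Q P" using biproduct_map(1)[OF Q P i] .
  show "c_comp C ?\<psi> ?\<phi> = c_id C P"
    using biproduct_map_comp[OF P Q P i i] biproduct_map_id[OF P] id_comp[OF i(1)] id_comp[OF i(2)]
    by simp
  show "c_comp C ?\<phi> ?\<psi> = c_id C Q"
    using biproduct_map_comp[OF Q P Q i i] biproduct_map_id[OF Q] id_comp[OF i(1)] id_comp[OF i(2)]
    by simp
qed

end

section \<open>\<open>*\<close>-categories\<close>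

locale star_category_locale =
  fixes C :: "('o, 'a, 'm) star_cat_scheme"
  assumes star_category: "star_category C"
begin

sublocale category_locale C
  using star_category unfolding star_category_def by unfold_locales simp

lemma star_hom: "f \<in> hom C X Y \<Longrightarrow> c_star C f \<in> hom C Y X"
  and star_star: "f \<in> hom C X Y \<Longrightarrow> c_star C (c_star C f) = f"
  and star_id: "X \<in> c_obj C \<Longrightarrow> c_star C (c_id C X) = c_id C X"
  using star_category unfolding star_category_def hom_def by auto

lemma star_comp: "f \<in> hom C X Y \<Longrightarrow> g \<in> hom C Y Z \<Longrightarrow>
    c_star C (c_comp C g f) = c_comp C (c_star C f) (c_star C g)"
  using star_category unfolding star_category_def hom_def by auto

lemma zero_arr_star:
  assumes "zero_arr C f" shows "zero_arr C (c_star C f)"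
proof -
  obtain Z g h where Z: "zero_obj C Z" and g: "g \<in> hom C (c_dom C f) Z"
    and h: "h \<in> hom C Z (c_cod C f)" and f: "f = c_comp C h g"
    using assms unfolding zero_arr_def by blast
  show ?thesis using zero_arrI[OF Z star_hom[OF h] star_hom[OF g]] star_comp[OF g h] f by simp
qed

lemma isometry_cancel:
  assumes k: "isometry C k" and h: "h \<in> hom C W (c_dom C k)"
  shows "c_comp C (c_star C k) (c_comp C k h) = h"
proof -
  have kh: "k \<in> hom C (c_dom C k) (c_cod C k)" using k arr_hom unfolding isometry_def by blast
  show ?thesis
    using comp_assoc[OF h kh star_hom[OF kh]] k id_comp[OF h] unfolding isometry_def by simp
qed

text \<open>The coproduct property is the adjoint of the product property, so it need not be
  assumed.\<close>

lemma orthonormal_biproductI: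
  assumes s1: "s1 \<in> hom C X1 P" and s2: "s2 \<in> hom C X2 P"
    and r1: "r1 = c_star C s1" and r2: "r2 = c_star C s2"
    and e1: "c_comp C r1 s1 = c_id C X1" and e2: "c_comp C r2 s2 = c_id C X2"
    and z1: "zero_arr C (c_comp C r2 s1)" and z2: "zero_arr C (c_comp C r1 s2)"
    and prod: "\<And>W f1 f2. f1 \<in> hom C W X1 \<Longrightarrow> f2 \<in> hom C W X2 \<Longrightarrow>
        \<exists>!h. h \<in> hom C W P \<and> c_comp C r1 h = f1 \<and> c_comp C r2 h = f2"
  shows "orthonormal_biproduct C X1 X2 P s1 r1 s2 r2"
proof -
  have r1h: "r1 \<in> hom C P X1" and r2h: "r2 \<in> hom C P X2" using r1 r2 star_hom s1 s2 by auto
  have coprod: "\<exists>!h. h \<in> hom C P W \<and> c_comp C h s1 = g1 \<and> c_comp C h s2 = g2"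
    if g1: "g1 \<in> hom C X1 W" and g2: "g2 \<in> hom C X2 W" for W g1 g2
  proof -
    have adj: "c_comp C h s1 = g1 \<and> c_comp C h s2 = g2 \<longleftrightarrow>
        c_comp C r1 (c_star C h) = c_star C g1 \<and> c_comp C r2 (c_star C h) = c_star C g2"
      if h: "h \<in> hom C P W" for h
      using star_comp[OF s1 h] star_comp[OF s2 h] star_star[OF g1] star_star[OF g2]
        star_star[OF comp_hom[OF s1 h]] star_star[OF comp_hom[OF s2 h]] r1 r2 by metis
    obtain h where h: "h \<in> hom C W P" "c_comp C r1 h = c_star C g1" "c_comp C r2 h = c_star C g2"
      and uniq: "\<And>h'. h' \<in> hom C W P \<Longrightarrow> c_comp C r1 h' = c_star C g1 \<Longrightarrow>
          c_comp C r2 h' = c_star C g2 \<Longrightarrow> h' = h"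
      using prod[OF star_hom[OF g1] star_hom[OF g2]] by metis
    show ?thesis
    proof (rule ex1I[of _ "c_star C h"])
      show "c_star C h \<in> hom C P W \<and> c_comp C (c_star C h) s1 = g1 \<and> c_comp C (c_star C h) s2 = g2"
        using adj[OF star_hom[OF h(1)]] star_hom[OF h(1)] star_star[OF h(1)] h by simp
    next
      fix x assume "x \<in> hom C P W \<and> c_comp C x s1 = g1 \<and> c_comp C x s2 = g2"
      then show "x = c_star C h" using adj uniq star_hom star_star by metis
    qed
  qed
  show ?thesis unfolding orthonormal_biproduct_def biproduct_def
    using s1 s2 r1h r2h e1 e2 z1 z2 prod coprod r1 r2 by blast
qed

lemma biproduct_map_star:
  assumes P: "orthonormal_biproduct C X1 X2 P s1 r1 s2 r2"
    and Q: "orthonormal_biproduct C Y1 Y2 Q t1 q1 t2 q2"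
    and a: "a \<in> hom C X1 Y1" and b: "b \<in> hom C X2 Y2"
  shows "c_star C (biproduct_map C P r1 r2 Q q1 q2 a b)
    = biproduct_map C Q q1 q2 P r1 r2 (c_star C a) (c_star C b)"
proof -
  have Pb: "biproduct C X1 X2 P s1 r1 s2 r2" and Qb: "biproduct C Y1 Y2 Q t1 q1 t2 q2"
    and r: "r1 = c_star C s1" "r2 = c_star C s2" and q: "q1 = c_star C t1" "q2 = c_star C t2"
    using P Q unfolding orthonormal_biproduct_def by auto
  note m = biproduct_map[OF Pb Qb a b] and Ph = biproductD[OF Pb] and Qh = biproductD[OF Qb]
  let ?m = "biproduct_map C P r1 r2 Q q1 q2 a b"
  have "c_comp C r1 (c_star C ?m) = c_comp C (c_star C a) q1"
    using arg_cong[OF biproduct_map_inj1[OF Pb Qb a b], of "c_star C"]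
      star_comp[OF Ph(1) m(1)] star_comp[OF a Qh(1)] r q by simp
  moreover have "c_comp C r2 (c_star C ?m) = c_comp C (c_star C b) q2"
    using arg_cong[OF biproduct_map_inj2[OF Pb Qb a b], of "c_star C"]
      star_comp[OF Ph(3) m(1)] star_comp[OF b Qh(3)] r q by simp
  ultimately show ?thesis
    using biproduct_map_unique[OF Qb Pb star_hom[OF a] star_hom[OF b] star_hom[OF m(1)]] by blast
qed

lemma normal_mono_kernel_of_adjoint:
  assumes m: "normal_mono C m" and k: "is_kernel C (c_star C m) k"
  shows "is_kernel C (c_star C k) m"
proof -
  obtain f where f: "is_kernel C f m" using m unfolding normal_mono_def by blast
  define A B K where "A = c_cod C m" and "B = c_cod C f" and "K = c_dom C k"
  have mh: "m \<in> hom C (c_dom C m) A" and fh: "f \<in> hom C A B"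
    using f unfolding is_kernel_def A_def B_def by (auto simp: hom_def)
  have kh: "k \<in> hom C K A" using kernel_hom[OF k star_hom[OF mh]] K_def by simp
  have ksh: "c_star C k \<in> hom C A K" using star_hom[OF kh] .
  have km: "zero_arr C (c_comp C (c_star C k) m)"
    using zero_arr_star[of "c_comp C (c_star C m) k"] k star_comp[OF kh star_hom[OF mh]] star_star[OF mh]
    unfolding is_kernel_def by simp
  have "zero_arr C (c_comp C (c_star C m) (c_star C f))"
    using zero_arr_star[of "c_comp C f m"] f star_comp[OF mh fh] unfolding is_kernel_def by simp
  then obtain v where v: "v \<in> hom C B K" "c_comp C k v = c_star C f"
    using kernel_factor[OF k star_hom[OF mh] star_hom[OF fh]] K_def by blast
  have fv: "f = c_comp C (c_star C v) (c_star C k)"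
    using arg_cong[OF v(2), of "c_star C"] star_comp[OF v(1) kh] star_star[OF fh] by simp
  have univ: "\<exists>!h. h \<in> hom C (c_dom C g) (c_dom C m) \<and> c_comp C m h = g"
    if g: "g \<in> c_arr C" "c_cod C g = c_dom C (c_star C k)" "zero_arr C (c_comp C (c_star C k) g)" for g
  proof -
    have gh: "g \<in> hom C (c_dom C g) A" using g hom_dom[OF ksh] by (simp add: hom_def)
    have "zero_arr C (c_comp C f g)"
      using fv comp_assoc[OF gh ksh star_hom[OF v(1)]]
        zero_arr_postcomp[OF g(3) comp_hom[OF gh ksh] star_hom[OF v(1)]] by simp
    then show ?thesis using kernel_factor[OF f fh gh] by simp
  qed
  show ?thesis unfolding is_kernel_def
    using hom_arr[OF ksh] hom_arr[OF mh] hom_dom[OF ksh] km univ A_def by simp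
qed

end

section \<open>The functor \<open>*\<close>-category\<close>

definition component :: "'f \<times> 'g \<times> ('o \<Rightarrow> 'b) \<Rightarrow> 'o \<Rightarrow> 'b" where
  "component x = snd (snd x)"

lemma component_triple [simp]: "component (F, G, \<sigma>) = \<sigma>"
  by (simp add: component_def)

locale functor_category =
  fixes C :: "('o1, 'a1) star_cat" and D :: "('o2, 'a2) star_cat"
  assumes star_category_C: "star_category C" and star_category_D: "star_category D"
begin

sublocale Cs: star_category_locale C by (rule star_category_locale.intro[OF star_category_C])
sublocale Ds: star_category_locale D by (rule star_category_locale.intro[OF star_category_D])

abbreviation FC where "FC \<equiv> functor_star_cat C D"

lemma star_functor_obj: "star_functor C D F \<Longrightarrow> X \<in> c_obj C \<Longrightarrow> fst F X \<in> c_obj D"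
  and star_functor_id: "star_functor C D F \<Longrightarrow> X \<in> c_obj C \<Longrightarrow> snd F (c_id C X) = c_id D (fst F X)"
  unfolding star_functor_def is_functor_def by blast+

lemma star_functor_hom: "star_functor C D F \<Longrightarrow> f \<in> hom C X Y \<Longrightarrow> snd F f \<in> hom D (fst F X) (fst F Y)"
  and star_functor_comp: "star_functor C D F \<Longrightarrow> f \<in> hom C X Y \<Longrightarrow> g \<in> hom C Y Z \<Longrightarrow>
    snd F (c_comp C g f) = c_comp D (snd F g) (snd F f)"
  and star_functor_star: "star_functor C D F \<Longrightarrow> f \<in> hom C X Y \<Longrightarrow>
    snd F (c_star C f) = c_star D (snd F f)"
  unfolding star_functor_def is_functor_def hom_def by auto

lemma star_functorI:
  assumes obj: "\<And>X. X \<in> c_obj C \<Longrightarrow> Fo X \<in> c_obj D"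
    and id: "\<And>X. X \<in> c_obj C \<Longrightarrow> Fa (c_id C X) = c_id D (Fo X)"
    and hom: "\<And>f X Y. f \<in> hom C X Y \<Longrightarrow> Fa f \<in> hom D (Fo X) (Fo Y)"
    and comp: "\<And>f g X Y Z. f \<in> hom C X Y \<Longrightarrow> g \<in> hom C Y Z \<Longrightarrow>
      Fa (c_comp C g f) = c_comp D (Fa g) (Fa f)"
    and star: "\<And>f X Y. f \<in> hom C X Y \<Longrightarrow> Fa (c_star C f) = c_star D (Fa f)"
  shows "star_functor C D (\<lambda>X\<in>c_obj C. Fo X, \<lambda>f\<in>c_arr C. Fa f)" (is "star_functor C D ?F")
  unfolding star_functor_def is_functor_def
proof (intro conjI ballI allI impI)
  fix X assume X: "X \<in> c_obj C"
  show "fst ?F X \<in> c_obj D" using X obj by simp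
  show "snd ?F (c_id C X) = c_id D (fst ?F X)" using X id Cs.hom_arr[OF Cs.id_hom[OF X]] by simp
next
  fix f assume f: "f \<in> c_arr C"
  then have fh: "f \<in> hom C (c_dom C f) (c_cod C f)" by (rule Cs.arr_hom)
  show "snd ?F f \<in> hom D (fst ?F (c_dom C f)) (fst ?F (c_cod C f))"
    using f hom[OF fh] Cs.hom_dom_obj[OF fh] Cs.hom_cod_obj[OF fh] by simp
  show "snd ?F (c_star C f) = c_star D (snd ?F f)"
    using f star[OF fh] Cs.hom_arr[OF Cs.star_hom[OF fh]] by simp
next
  fix f g assume "f \<in> c_arr C" "g \<in> c_arr C" "c_cod C f = c_dom C g"
  then have f: "f \<in> hom C (c_dom C f) (c_cod C f)" and g: "g \<in> hom C (c_cod C f) (c_cod C g)"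
    by (simp_all add: hom_def)
  show "snd ?F (c_comp C g f) = c_comp D (snd ?F g) (snd ?F f)"
    using comp[OF f g] Cs.hom_arr[OF Cs.comp_hom[OF f g]] Cs.hom_arr[OF f] Cs.hom_arr[OF g] by simp
qed simp_all

lemma FC_obj_iff: "F \<in> c_obj FC \<longleftrightarrow> star_functor C D F"
  by (simp add: functor_star_cat_def)

lemma FC_hom_iff: "(F', G', \<sigma>) \<in> hom FC F G \<longleftrightarrow>
    F' = F \<and> G' = G \<and> star_functor C D F \<and> star_functor C D G \<and> nat_trans C D F G \<sigma>"
  by (auto simp: hom_def functor_star_cat_def)

lemma FC_homE:
  assumes "x \<in> hom FC F G"
  obtains \<sigma> where "x = (F, G, \<sigma>)" "star_functor C D F" "star_functor C D G" "nat_trans C D F G \<sigma>"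
  using assms by (cases x) (auto simp: FC_hom_iff)

lemma FC_dom: "c_dom FC (F, G, \<sigma>) = F"
  by (simp add: functor_star_cat_def)

lemma FC_hom_functors:
  "x \<in> hom FC F G \<Longrightarrow> star_functor C D F" "x \<in> hom FC F G \<Longrightarrow> star_functor C D G"
  by (auto elim: FC_homE)

lemma FC_id: "c_id FC F = (F, F, \<lambda>X\<in>c_obj C. c_id D (fst F X))"
  and FC_comp: "c_comp FC (G', H, \<tau>) (F, G, \<sigma>) = (F, H, \<lambda>X\<in>c_obj C. c_comp D (\<tau> X) (\<sigma> X))"
  and FC_star: "c_star FC (F, G, \<sigma>) = (G, F, \<lambda>X\<in>c_obj C. c_star D (\<sigma> X))"
  by (simp_all add: functor_star_cat_def restrict_def)

lemma FC_homI:
  assumes F: "star_functor C D F" and G: "star_functor C D G"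
    and hom: "\<And>X. X \<in> c_obj C \<Longrightarrow> \<sigma> X \<in> hom D (fst F X) (fst G X)"
    and nat: "\<And>f X Y. f \<in> hom C X Y \<Longrightarrow> c_comp D (\<sigma> Y) (snd F f) = c_comp D (snd G f) (\<sigma> X)"
  shows "(F, G, \<lambda>X\<in>c_obj C. \<sigma> X) \<in> hom FC F G"
  unfolding FC_hom_iff nat_trans_def
proof (intro conjI refl F G ballI allI impI)
  show "is_functor C D F" "is_functor C D G" using F G unfolding star_functor_def by blast+
  fix f assume "f \<in> c_arr C"
  then have f: "f \<in> hom C (c_dom C f) (c_cod C f)" by (rule Cs.arr_hom)
  show "c_comp D ((\<lambda>X\<in>c_obj C. \<sigma> X) (c_cod C f)) (snd F f) =
      c_comp D (snd G f) ((\<lambda>X\<in>c_obj C. \<sigma> X) (c_dom C f))"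
    using nat[OF f] Cs.hom_dom_obj[OF f] Cs.hom_cod_obj[OF f] by simp
qed (use hom in simp_all)

lemma component_hom: "x \<in> hom FC F G \<Longrightarrow> X \<in> c_obj C \<Longrightarrow> component x X \<in> hom D (fst F X) (fst G X)"
  by (erule FC_homE) (simp add: nat_trans_def)

lemma component_natural:
  "x \<in> hom FC F G \<Longrightarrow> f \<in> hom C X Y \<Longrightarrow>
    c_comp D (component x Y) (snd F f) = c_comp D (snd G f) (component x X)"
  by (erule FC_homE) (auto simp: nat_trans_def hom_def)

lemma component_id: "X \<in> c_obj C \<Longrightarrow> component (c_id FC F) X = c_id D (fst F X)"
  and component_comp: "X \<in> c_obj C \<Longrightarrow>
    component (c_comp FC y x) X = c_comp D (component y X) (component x X)"
  and component_star: "X \<in> c_obj C \<Longrightarrow> component (c_star FC x) X = c_star D (component x X)"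
  by (cases x, cases y, simp add: FC_id FC_comp FC_star)+

lemma FC_arr_eqI:
  assumes x: "x \<in> hom FC F G" and y: "y \<in> hom FC F G"
    and eq: "\<And>X. X \<in> c_obj C \<Longrightarrow> component x X = component y X"
  shows "x = y"
proof -
  obtain \<sigma> where \<sigma>: "x = (F, G, \<sigma>)" "nat_trans C D F G \<sigma>" using FC_homE[OF x] by metis
  obtain \<tau> where \<tau>: "y = (F, G, \<tau>)" "nat_trans C D F G \<tau>" using FC_homE[OF y] by metis
  have "\<sigma> = \<tau>"
  proof
    fix X show "\<sigma> X = \<tau> X"
      using \<sigma> \<tau> eq[of X] unfolding nat_trans_def by (cases "X \<in> c_obj C") auto
  qed
  then show ?thesis using \<sigma> \<tau> by simp
qed

lemma FC_id_hom:
  assumes F: "star_functor C D F"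
  shows "c_id FC F \<in> hom FC F F"
  unfolding FC_id
proof (rule FC_homI[OF F F])
  fix f X Y assume f: "f \<in> hom C X Y"
  show "c_comp D (c_id D (fst F Y)) (snd F f) = c_comp D (snd F f) (c_id D (fst F X))"
    using Ds.id_comp Ds.comp_id star_functor_hom[OF F f] by simp
qed (simp add: Ds.id_hom star_functor_obj[OF F])

lemma FC_comp_hom:
  assumes x: "x \<in> hom FC F G" and y: "y \<in> hom FC G H"
  shows "c_comp FC y x \<in> hom FC F H"
proof -
  obtain \<sigma> where \<sigma>: "x = (F, G, \<sigma>)" "star_functor C D F" using FC_homE[OF x] by metis
  obtain \<tau> where \<tau>: "y = (G, H, \<tau>)" "star_functor C D H" using FC_homE[OF y] by metis
  have "(F, H, \<lambda>X\<in>c_obj C. c_comp D (\<tau> X) (\<sigma> X)) \<in> hom FC F H"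
  proof (rule FC_homI[OF \<sigma>(2) \<tau>(2)])
    fix X assume "X \<in> c_obj C"
    then show "c_comp D (\<tau> X) (\<sigma> X) \<in> hom D (fst F X) (fst H X)"
      using Ds.comp_hom component_hom[OF x] component_hom[OF y] \<sigma>(1) \<tau>(1) by fastforce
  next
    fix f X Y assume f: "f \<in> hom C X Y"
    note XY = Cs.hom_dom_obj[OF f] Cs.hom_cod_obj[OF f]
    have h: "\<sigma> X \<in> hom D (fst F X) (fst G X)" "\<tau> X \<in> hom D (fst G X) (fst H X)"
        "\<sigma> Y \<in> hom D (fst F Y) (fst G Y)" "\<tau> Y \<in> hom D (fst G Y) (fst H Y)"
      using component_hom[OF x] component_hom[OF y] XY \<sigma>(1) \<tau>(1) by fastforce+
    have n: "c_comp D (\<sigma> Y) (snd F f) = c_comp D (snd G f) (\<sigma> X)"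
        "c_comp D (\<tau> Y) (snd G f) = c_comp D (snd H f) (\<tau> X)"
      using component_natural[OF x f] component_natural[OF y f] \<sigma>(1) \<tau>(1) by simp_all
    have Ff: "snd F f \<in> hom D (fst F X) (fst F Y)" using star_functor_hom[OF \<sigma>(2) f] .
    have Gf: "snd G f \<in> hom D (fst G X) (fst G Y)" using star_functor_hom[OF FC_hom_functors(2)[OF x] f] .
    have Hf: "snd H f \<in> hom D (fst H X) (fst H Y)" using star_functor_hom[OF \<tau>(2) f] .
    show "c_comp D (c_comp D (\<tau> Y) (\<sigma> Y)) (snd F f) = c_comp D (snd H f) (c_comp D (\<tau> X) (\<sigma> X))"
      using Ds.comp_assoc[OF Ff h(3) h(4)] n(1) Ds.comp_assoc[OF h(1) Gf h(4)] n(2)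
        Ds.comp_assoc[OF h(1) h(2) Hf] by simp
  qed
  then show ?thesis using \<sigma>(1) \<tau>(1) FC_comp by simp
qed

lemma FC_star_hom:
  assumes x: "x \<in> hom FC F G"
  shows "c_star FC x \<in> hom FC G F"
proof -
  obtain \<sigma> where \<sigma>: "x = (F, G, \<sigma>)" "star_functor C D F" "star_functor C D G"
    using FC_homE[OF x] by metis
  have "(G, F, \<lambda>X\<in>c_obj C. c_star D (\<sigma> X)) \<in> hom FC G F"
  proof (rule FC_homI[OF \<sigma>(3) \<sigma>(2)])
    fix X assume "X \<in> c_obj C"
    then show "c_star D (\<sigma> X) \<in> hom D (fst G X) (fst F X)"
      using Ds.star_hom component_hom[OF x] \<sigma>(1) by fastforce
  next
    fix f X Y assume f: "f \<in> hom C X Y"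
    note XY = Cs.hom_dom_obj[OF f] Cs.hom_cod_obj[OF f]
    have h: "\<sigma> X \<in> hom D (fst F X) (fst G X)" "\<sigma> Y \<in> hom D (fst F Y) (fst G Y)"
      using component_hom[OF x] XY \<sigma>(1) by fastforce+
    \<comment> \<open>the naturality square of \<open>\<sigma>\<^sup>*\<close> at \<open>f\<close> is the adjoint of that of \<open>\<sigma>\<close> at \<open>f\<^sup>*\<close>\<close>
    have "c_comp D (\<sigma> X) (snd F (c_star C f)) = c_comp D (snd G (c_star C f)) (\<sigma> Y)"
      using component_natural[OF x Cs.star_hom[OF f]] \<sigma>(1) by simp
    then have "c_star D (c_comp D (\<sigma> X) (c_star D (snd F f))) =
        c_star D (c_comp D (c_star D (snd G f)) (\<sigma> Y))"
      using star_functor_star[OF \<sigma>(2) f] star_functor_star[OF \<sigma>(3) f] by simp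
    then show "c_comp D (c_star D (\<sigma> Y)) (snd G f) = c_comp D (snd F f) (c_star D (\<sigma> X))"
      using Ds.star_comp[OF Ds.star_hom[OF star_functor_hom[OF \<sigma>(2) f]] h(1)]
        Ds.star_comp[OF h(2) Ds.star_hom[OF star_functor_hom[OF \<sigma>(3) f]]]
        Ds.star_star[OF star_functor_hom[OF \<sigma>(2) f]] Ds.star_star[OF star_functor_hom[OF \<sigma>(3) f]]
      by simp
  qed
  then show ?thesis using \<sigma>(1) FC_star by simp
qed

lemma FC_id_comp:
  assumes x: "x \<in> hom FC F G" shows "c_comp FC (c_id FC G) x = x"
  by (rule FC_arr_eqI[OF FC_comp_hom[OF x FC_id_hom[OF FC_hom_functors(2)[OF x]]] x])
    (simp add: component_comp component_id Ds.id_comp[OF component_hom[OF x]])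

lemma FC_comp_id:
  assumes x: "x \<in> hom FC F G" shows "c_comp FC x (c_id FC F) = x"
  by (rule FC_arr_eqI[OF FC_comp_hom[OF FC_id_hom[OF FC_hom_functors(1)[OF x]] x] x])
    (simp add: component_comp component_id Ds.comp_id[OF component_hom[OF x]])

lemma FC_comp_assoc:
  assumes x: "x \<in> hom FC F G" and y: "y \<in> hom FC G H" and z: "z \<in> hom FC H K"
  shows "c_comp FC z (c_comp FC y x) = c_comp FC (c_comp FC z y) x"
  by (rule FC_arr_eqI[OF FC_comp_hom[OF FC_comp_hom[OF x y] z] FC_comp_hom[OF x FC_comp_hom[OF y z]]])
    (simp add: component_comp Ds.comp_assoc[OF component_hom[OF x] component_hom[OF y] component_hom[OF z]])

lemma FC_star_star:
  assumes x: "x \<in> hom FC F G" shows "c_star FC (c_star FC x) = x"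
  by (rule FC_arr_eqI[OF FC_star_hom[OF FC_star_hom[OF x]] x])
    (simp add: component_star Ds.star_star[OF component_hom[OF x]])

lemma FC_star_id:
  assumes F: "star_functor C D F" shows "c_star FC (c_id FC F) = c_id FC F"
  by (rule FC_arr_eqI[OF FC_star_hom[OF FC_id_hom[OF F]] FC_id_hom[OF F]])
    (simp add: component_star component_id Ds.star_id star_functor_obj[OF F])

lemma FC_star_comp:
  assumes x: "x \<in> hom FC F G" and y: "y \<in> hom FC G H"
  shows "c_star FC (c_comp FC y x) = c_comp FC (c_star FC x) (c_star FC y)"
  by (rule FC_arr_eqI[OF FC_star_hom[OF FC_comp_hom[OF x y]] FC_comp_hom[OF FC_star_hom[OF y] FC_star_hom[OF x]]])
    (simp add: component_star component_comp Ds.star_comp[OF component_hom[OF x] component_hom[OF y]])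

lemma FC_star_category: "star_category FC"
proof -
  have arr: "f \<in> hom FC (c_dom FC f) (c_cod FC f)" if "f \<in> c_arr FC" for f
    using that unfolding hom_def by simp
  have composable: "f \<in> hom FC (c_dom FC f) (c_cod FC f)" "g \<in> hom FC (c_cod FC f) (c_cod FC g)"
    if "f \<in> c_arr FC" "g \<in> c_arr FC" "c_cod FC f = c_dom FC g" for f g
    using arr[OF that(1)] arr[OF that(2)] that(3) by simp_all
  have obj: "F \<in> c_obj FC" "G \<in> c_obj FC" if "f \<in> hom FC F G" for f F G
    using FC_hom_functors[OF that] FC_obj_iff by simp_all
  show ?thesis unfolding star_category_def category_def
    using arr obj composable FC_id_hom FC_comp_hom FC_id_comp FC_comp_id FC_comp_assoc
      FC_star_hom FC_star_star FC_star_id FC_star_comp FC_obj_iff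
    by (intro conjI ballI allI impI) metis+
qed

sublocale FCs: star_category_locale FC
  by (rule star_category_locale.intro[OF FC_star_category])

end

section \<open>Limits computed pointwise\<close>

definition const_functor ::
  "('o1, 'a1, 'm1) cat_scheme \<Rightarrow> ('o2, 'a2, 'm2) cat_scheme \<Rightarrow> 'o2 \<Rightarrow> ('o1, 'a1, 'o2, 'a2) functr" where
  "const_functor C D Z = (\<lambda>X\<in>c_obj C. Z, \<lambda>f\<in>c_arr C. c_id D Z)"

context functor_category
begin

lemma natural_after_comp:
  assumes m: "m \<in> hom FC H F'" and g: "g \<in> hom FC W F'"
    and h: "\<And>X. X \<in> c_obj C \<Longrightarrow> h X \<in> hom D (fst W X) (fst H X)"
    and mh: "\<And>X. X \<in> c_obj C \<Longrightarrow> c_comp D (component m X) (h X) = component g X"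
    and f: "f \<in> hom C X Y"
  shows "c_comp D (component m Y) (c_comp D (h Y) (snd W f)) =
    c_comp D (component m Y) (c_comp D (snd H f) (h X))"
proof -
  note XY = Cs.hom_dom_obj[OF f] Cs.hom_cod_obj[OF f]
  note Wf = star_functor_hom[OF FC_hom_functors(1)[OF g] f]
    and Hf = star_functor_hom[OF FC_hom_functors(1)[OF m] f]
    and F'f = star_functor_hom[OF FC_hom_functors(2)[OF m] f]
  note mX = component_hom[OF m XY(1)] and mY = component_hom[OF m XY(2)]
  have "c_comp D (component m Y) (c_comp D (h Y) (snd W f)) = c_comp D (component g Y) (snd W f)"
    using Ds.comp_assoc[OF Wf h[OF XY(2)] mY] mh[OF XY(2)] by simp
  also have "\<dots> = c_comp D (snd F' f) (c_comp D (component m X) (h X))"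
    using component_natural[OF g f] mh[OF XY(1)] by simp
  also have "\<dots> = c_comp D (c_comp D (component m Y) (snd H f)) (h X)"
    using Ds.comp_assoc[OF h[OF XY(1)] mX F'f] component_natural[OF m f] by simp
  also have "\<dots> = c_comp D (component m Y) (c_comp D (snd H f) (h X))"
    using Ds.comp_assoc[OF h[OF XY(1)] Hf mY] .
  finally show ?thesis .
qed

lemma FC_factorization:
  assumes m1: "m1 \<in> hom FC H F1" and m2: "m2 \<in> hom FC H F2"
    and g1: "g1 \<in> hom FC W F1" and g2: "g2 \<in> hom FC W F2"
    and monic: "\<And>X. X \<in> c_obj C \<Longrightarrow> jointly_monic D (fst H X) (component m1 X) (component m2 X)"
    and factor: "\<And>X. X \<in> c_obj C \<Longrightarrow> \<exists>h. h \<in> hom D (fst W X) (fst H X) \<and>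
        c_comp D (component m1 X) h = component g1 X \<and> c_comp D (component m2 X) h = component g2 X"
  shows "\<exists>!h. h \<in> hom FC W H \<and> c_comp FC m1 h = g1 \<and> c_comp FC m2 h = g2"
proof -
  obtain h where h: "\<And>X. X \<in> c_obj C \<Longrightarrow> h X \<in> hom D (fst W X) (fst H X)"
    and h1: "\<And>X. X \<in> c_obj C \<Longrightarrow> c_comp D (component m1 X) (h X) = component g1 X"
    and h2: "\<And>X. X \<in> c_obj C \<Longrightarrow> c_comp D (component m2 X) (h X) = component g2 X"
    using factor by metis
  note W = FC_hom_functors(1)[OF g1] and H = FC_hom_functors(1)[OF m1]
  have hh: "(W, H, \<lambda>X\<in>c_obj C. h X) \<in> hom FC W H"
  proof (rule FC_homI[OF W H h])
    fix f X Y assume f: "f \<in> hom C X Y"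
    note XY = Cs.hom_dom_obj[OF f] Cs.hom_cod_obj[OF f]
    show "c_comp D (h Y) (snd W f) = c_comp D (snd H f) (h X)"
      using Ds.jointly_monicD[OF monic[OF XY(2)] Ds.comp_hom[OF star_functor_hom[OF W f] h[OF XY(2)]]
          Ds.comp_hom[OF h[OF XY(1)] star_functor_hom[OF H f]]]
        natural_after_comp[OF m1 g1 h h1 f] natural_after_comp[OF m2 g2 h h2 f] by blast
  qed
  show ?thesis
  proof (rule ex1I[of _ "(W, H, \<lambda>X\<in>c_obj C. h X)"])
    show "(W, H, \<lambda>X\<in>c_obj C. h X) \<in> hom FC W H \<and>
        c_comp FC m1 (W, H, \<lambda>X\<in>c_obj C. h X) = g1 \<and> c_comp FC m2 (W, H, \<lambda>X\<in>c_obj C. h X) = g2"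
      using hh FC_arr_eqI[OF FCs.comp_hom[OF hh m1] g1] FC_arr_eqI[OF FCs.comp_hom[OF hh m2] g2]
        component_comp h1 h2 by simp
  next
    fix h' assume h': "h' \<in> hom FC W H \<and> c_comp FC m1 h' = g1 \<and> c_comp FC m2 h' = g2"
    show "h' = (W, H, \<lambda>X\<in>c_obj C. h X)"
    proof (rule FC_arr_eqI[OF conjunct1[OF h'] hh])
      fix X assume X: "X \<in> c_obj C"
      have "c_comp D (component m1 X) (component h' X) = component g1 X"
        "c_comp D (component m2 X) (component h' X) = component g2 X"
        using component_comp[OF X, of m1 h'] component_comp[OF X, of m2 h'] h' by simp_all
      then show "component h' X = component (W, H, \<lambda>X\<in>c_obj C. h X) X"
        using Ds.jointly_monicD[OF monic[OF X] component_hom[OF conjunct1[OF h'] X] h[OF X]]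
          h1[OF X] h2[OF X] X by simp
    qed
  qed
qed

lemma FC_unique_arr:
  assumes F: "star_functor C D F" and G: "star_functor C D G"
    and unique: "\<And>X Y. X \<in> c_obj C \<Longrightarrow> Y \<in> c_obj C \<Longrightarrow> \<exists>!a. a \<in> hom D (fst F X) (fst G Y)"
  shows "\<exists>!x. x \<in> hom FC F G"
proof -
  have eq: "a = b" if "X \<in> c_obj C" "Y \<in> c_obj C" "a \<in> hom D (fst F X) (fst G Y)"
    "b \<in> hom D (fst F X) (fst G Y)" for X Y a b
    using unique that by blast
  have ex: "\<exists>a. a \<in> hom D (fst F X) (fst G X)" if "X \<in> c_obj C" for X
    using unique that by blast
  obtain \<sigma> where \<sigma>: "\<And>X. X \<in> c_obj C \<Longrightarrow> \<sigma> X \<in> hom D (fst F X) (fst G X)"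
    using ex by metis
  have "(F, G, \<lambda>X\<in>c_obj C. \<sigma> X) \<in> hom FC F G"
  proof (rule FC_homI[OF F G \<sigma>])
    fix f X Y assume f: "f \<in> hom C X Y"
    note XY = Cs.hom_dom_obj[OF f] Cs.hom_cod_obj[OF f]
    show "c_comp D (\<sigma> Y) (snd F f) = c_comp D (snd G f) (\<sigma> X)"
      using eq[OF XY] Ds.comp_hom \<sigma>[OF XY(1)] \<sigma>[OF XY(2)] star_functor_hom[OF F f]
        star_functor_hom[OF G f] by blast
  qed
  moreover have "x = y" if "x \<in> hom FC F G" "y \<in> hom FC F G" for x y
    using FC_arr_eqI[OF that] eq component_hom that by blast
  ultimately show ?thesis by blast
qed

lemma zero_obj_const_functor:
  assumes Z: "zero_obj D Z"
  shows "zero_obj FC (const_functor C D Z)"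
proof -
  have ZD: "Z \<in> c_obj D" using Ds.zero_obj_obj[OF Z] .
  have K: "star_functor C D (const_functor C D Z)"
    unfolding const_functor_def
    by (rule star_functorI)
      (simp_all add: ZD Ds.id_hom Ds.id_comp[OF Ds.id_hom[OF ZD]] Ds.star_id[OF ZD])
  have Kfst: "fst (const_functor C D Z) X = Z" if "X \<in> c_obj C" for X
    using that by (simp add: const_functor_def)
  show ?thesis unfolding zero_obj_def FC_obj_iff
  proof (intro conjI ballI K)
    fix F assume "F \<in> c_obj FC"
    then have F: "star_functor C D F" using FC_obj_iff by simp
    have FD: "fst F X \<in> c_obj D" if "X \<in> c_obj C" for X using star_functor_obj[OF F that] .
    show "\<exists>!x. x \<in> hom FC (const_functor C D Z) F"
      by (rule FC_unique_arr[OF K F]) (use Z FD Kfst in \<open>simp add: zero_obj_def\<close>)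
    show "\<exists>!x. x \<in> hom FC F (const_functor C D Z)"
      by (rule FC_unique_arr[OF F K]) (use Z FD Kfst in \<open>simp add: zero_obj_def\<close>)
  qed
qed

lemma FC_zero_arr_iff:
  assumes Z: "zero_obj D Z" and x: "x \<in> hom FC F G"
  shows "zero_arr FC x \<longleftrightarrow> (\<forall>X\<in>c_obj C. zero_arr D (component x X))"
proof
  let ?Z = "const_functor C D Z"
  have Z': "zero_obj FC ?Z" using zero_obj_const_functor[OF Z] .
  have Zfst: "fst ?Z X = Z" if "X \<in> c_obj C" for X using that by (simp add: const_functor_def)
  {
    fix g h assume g: "g \<in> hom FC F ?Z" and h: "h \<in> hom FC ?Z G"
    have "zero_arr D (component (c_comp FC h g) X)" if X: "X \<in> c_obj C" for X
      using Ds.zero_arrI[OF Z] component_hom[OF g X] component_hom[OF h X] Zfst[OF X]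
        component_comp[OF X] by simp
  } note through_zero = this
  show "\<forall>X\<in>c_obj C. zero_arr D (component x X)" if "zero_arr FC x"
    using FCs.zero_arr_factor[OF that x Z'] through_zero by metis
  assume pointwise: "\<forall>X\<in>c_obj C. zero_arr D (component x X)"
  have FG: "F \<in> c_obj FC" "G \<in> c_obj FC"
    using x FC_obj_iff by (auto elim: FC_homE)
  obtain g h where g: "g \<in> hom FC F ?Z" and h: "h \<in> hom FC ?Z G"
    using FCs.zero_obj_to[OF Z' FG(1)] FCs.zero_obj_from[OF Z' FG(2)] by blast
  have "x = c_comp FC h g"
  proof (rule FC_arr_eqI[OF x FCs.comp_hom[OF g h]])
    fix X assume X: "X \<in> c_obj C"
    show "component x X = component (c_comp FC h g) X"
      using Ds.zero_arr_unique[OF _ through_zero[OF g h X] component_hom[OF x X]]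
        component_hom[OF FCs.comp_hom[OF g h] X] pointwise X by blast
  qed
  then show "zero_arr FC x" using FCs.zero_arrI[OF Z' g h] by simp
qed

end

text \<open>Since \<open>k\<^sup>* \<circ> k = 1\<close>, the factorisation of \<open>F f \<circ> k\<^sub>X\<close> through \<open>k\<^sub>Y\<close> is
  \<open>k\<^sub>Y\<^sup>* \<circ> F f \<circ> k\<^sub>X\<close>; this closed form makes the functor laws equational.\<close>

definition subfunctor ::
  "('o1, 'a1, 'm1) cat_scheme \<Rightarrow> ('o2, 'a2, 'm2) star_cat_scheme \<Rightarrow>
   ('o1, 'a1, 'o2, 'a2) functr \<Rightarrow> ('o1 \<Rightarrow> 'a2) \<Rightarrow> ('o1, 'a1, 'o2, 'a2) functr" where
  "subfunctor C D F k = (\<lambda>X\<in>c_obj C. c_dom D (k X),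
     \<lambda>f\<in>c_arr C. c_comp D (c_star D (k (c_cod C f))) (c_comp D (snd F f) (k (c_dom C f))))"

definition biproduct_functor ::
  "('o1, 'a1, 'm1) cat_scheme \<Rightarrow> ('o2, 'a2, 'm2) cat_scheme \<Rightarrow>
   ('o1, 'a1, 'o2, 'a2) functr \<Rightarrow> ('o1, 'a1, 'o2, 'a2) functr \<Rightarrow>
   ('o1 \<Rightarrow> 'o2) \<Rightarrow> ('o1 \<Rightarrow> 'a2) \<Rightarrow> ('o1 \<Rightarrow> 'a2) \<Rightarrow> ('o1, 'a1, 'o2, 'a2) functr" where
  "biproduct_functor C D F G B q1 q2 = (\<lambda>X\<in>c_obj C. B X,
     \<lambda>f\<in>c_arr C. biproduct_map D (B (c_dom C f)) (q1 (c_dom C f)) (q2 (c_dom C f))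
        (B (c_cod C f)) (q1 (c_cod C f)) (q2 (c_cod C f)) (snd F f) (snd G f))"

context functor_category
begin

context
  fixes F :: "('o1, 'a1, 'o2, 'a2) functr" and k :: "'o1 \<Rightarrow> 'a2"
  assumes F: "star_functor C D F"
    and isometry_k: "\<And>X. X \<in> c_obj C \<Longrightarrow> isometry D (k X)"
    and cod_k: "\<And>X. X \<in> c_obj C \<Longrightarrow> c_cod D (k X) = fst F X"
    and stable: "\<And>f X Y. f \<in> hom C X Y \<Longrightarrow> \<exists>h. h \<in> hom D (c_dom D (k X)) (c_dom D (k Y)) \<and>
        c_comp D (k Y) h = c_comp D (snd F f) (k X)"
begin

lemma subfunctor_incl_hom: "X \<in> c_obj C \<Longrightarrow> k X \<in> hom D (c_dom D (k X)) (fst F X)"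
  using isometry_k cod_k unfolding isometry_def hom_def by blast

lemma subfunctor_factor:
  assumes f: "f \<in> hom C X Y"
  shows "c_comp D (c_star D (k Y)) (c_comp D (snd F f) (k X)) \<in> hom D (c_dom D (k X)) (c_dom D (k Y))"
    and "c_comp D (k Y) (c_comp D (c_star D (k Y)) (c_comp D (snd F f) (k X))) = c_comp D (snd F f) (k X)"
proof -
  obtain h where h: "h \<in> hom D (c_dom D (k X)) (c_dom D (k Y))" "c_comp D (k Y) h = c_comp D (snd F f) (k X)"
    using stable[OF f] by blast
  moreover have "c_comp D (c_star D (k Y)) (c_comp D (snd F f) (k X)) = h"
    using Ds.isometry_cancel[OF isometry_k[OF Cs.hom_cod_obj[OF f]] h(1)] h(2) by simp
  ultimately show "c_comp D (c_star D (k Y)) (c_comp D (snd F f) (k X)) \<in> hom D (c_dom D (k X)) (c_dom D (k Y))"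
    and "c_comp D (k Y) (c_comp D (c_star D (k Y)) (c_comp D (snd F f) (k X))) = c_comp D (snd F f) (k X)"
    by simp_all
qed

lemma subfunctor_star_functor: "star_functor C D (subfunctor C D F k)"
proof -
  define S where "S f = c_comp D (c_star D (k (c_cod C f))) (c_comp D (snd F f) (k (c_dom C f)))" for f
  have S: "S f = c_comp D (c_star D (k Y)) (c_comp D (snd F f) (k X))" if "f \<in> hom C X Y" for f X Y
    using that S_def by (simp add: hom_def)
  note kh = subfunctor_incl_hom
  show ?thesis
    unfolding subfunctor_def S_def[symmetric]
  proof (rule star_functorI)
    fix X assume X: "X \<in> c_obj C"
    show "c_dom D (k X) \<in> c_obj D" using Ds.hom_dom_obj[OF kh[OF X]] .
    show "S (c_id C X) = c_id D (c_dom D (k X))"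
      using S[OF Cs.id_hom[OF X]] star_functor_id[OF F X] Ds.id_comp[OF kh[OF X]] isometry_k[OF X]
      unfolding isometry_def by simp
  next
    fix f X Y assume f: "f \<in> hom C X Y"
    show "S f \<in> hom D (c_dom D (k X)) (c_dom D (k Y))" using subfunctor_factor(1)[OF f] S[OF f] by simp
    note XY = Cs.hom_dom_obj[OF f] Cs.hom_cod_obj[OF f] and Ff = star_functor_hom[OF F f]
    show "S (c_star C f) = c_star D (S f)"
      using S[OF f] S[OF Cs.star_hom[OF f]] star_functor_star[OF F f]
        Ds.star_comp[OF Ds.comp_hom[OF kh[OF XY(1)] Ff] Ds.star_hom[OF kh[OF XY(2)]]]
        Ds.star_comp[OF kh[OF XY(1)] Ff] Ds.star_star[OF kh[OF XY(2)]]
        Ds.comp_assoc[OF kh[OF XY(2)] Ds.star_hom[OF Ff] Ds.star_hom[OF kh[OF XY(1)]]]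
      by simp
  next
    fix f g X Y Z assume f: "f \<in> hom C X Y" and g: "g \<in> hom C Y Z"
    note XYZ = Cs.hom_dom_obj[OF f] Cs.hom_cod_obj[OF f] Cs.hom_cod_obj[OF g]
    note Ff = star_functor_hom[OF F f] and Fg = star_functor_hom[OF F g]
    note Sf = subfunctor_factor[OF f, folded S[OF f]]
    have "c_comp D (S g) (S f) = c_comp D (c_star D (k Z)) (c_comp D (snd F g) (c_comp D (k Y) (S f)))"
      using S[OF g] Ds.comp_assoc[OF Sf(1) kh[OF XYZ(2)] Fg]
        Ds.comp_assoc[OF Sf(1) Ds.comp_hom[OF kh[OF XYZ(2)] Fg] Ds.star_hom[OF kh[OF XYZ(3)]]]
      by simp
    also have "\<dots> = S (c_comp C g f)"
      using Sf(2) S[OF Cs.comp_hom[OF f g]] star_functor_comp[OF F f g] Ds.comp_assoc[OF kh[OF XYZ(1)] Ff Fg]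
      by simp
    finally show "S (c_comp C g f) = c_comp D (S g) (S f)" by simp
  qed
qed

lemma subfunctor_incl: "(subfunctor C D F k, F, \<lambda>X\<in>c_obj C. k X) \<in> hom FC (subfunctor C D F k) F"
proof (rule FC_homI[OF subfunctor_star_functor F])
  fix X assume "X \<in> c_obj C"
  then show "k X \<in> hom D (fst (subfunctor C D F k) X) (fst F X)"
    using subfunctor_incl_hom by (simp add: subfunctor_def)
next
  fix f X Y assume f: "f \<in> hom C X Y"
  then show "c_comp D (k Y) (snd (subfunctor C D F k) f) = c_comp D (snd F f) (k X)"
    using subfunctor_factor(2)[OF f] Cs.hom_arr[OF f] by (simp add: subfunctor_def hom_def)
qed


lemma subfunctor_incl_isometry: "isometry FC (subfunctor C D F k, F, \<lambda>X\<in>c_obj C. k X)"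
  unfolding isometry_def
proof
  let ?k = "(subfunctor C D F k, F, \<lambda>X\<in>c_obj C. k X)"
  show "?k \<in> c_arr FC" using FCs.hom_arr[OF subfunctor_incl] .
  show "c_comp FC (c_star FC ?k) ?k = c_id FC (c_dom FC ?k)"
  proof (rule FC_arr_eqI[OF FCs.comp_hom[OF subfunctor_incl FCs.star_hom[OF subfunctor_incl]]])
    show "c_id FC (c_dom FC ?k) \<in> hom FC (subfunctor C D F k) (subfunctor C D F k)"
      using FC_id_hom[OF subfunctor_star_functor] by (simp add: FC_dom)
    fix X assume X: "X \<in> c_obj C"
    show "component (c_comp FC (c_star FC ?k) ?k) X = component (c_id FC (c_dom FC ?k)) X"
      using isometry_k[OF X] X component_comp[OF X] component_star[OF X] component_id[OF X]
      unfolding isometry_def subfunctor_def by (simp add: FC_dom)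
  qed
qed
end

context
  fixes F G :: "('o1, 'a1, 'o2, 'a2) functr" and B :: "'o1 \<Rightarrow> 'o2" and q1 q2 :: "'o1 \<Rightarrow> 'a2"
  assumes F: "star_functor C D F" and G: "star_functor C D G"
    and bp: "\<And>X. X \<in> c_obj C \<Longrightarrow> orthonormal_biproduct D (fst F X) (fst G X) (B X)
      (c_star D (q1 X)) (q1 X) (c_star D (q2 X)) (q2 X)"
begin

lemma biproduct_functor_biproduct:
  "X \<in> c_obj C \<Longrightarrow> biproduct D (fst F X) (fst G X) (B X) (c_star D (q1 X)) (q1 X) (c_star D (q2 X)) (q2 X)"
  using bp unfolding orthonormal_biproduct_def by blast

lemma biproduct_functor_arr:
  assumes f: "f \<in> hom C X Y"
  shows "snd (biproduct_functor C D F G B q1 q2) f =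
    biproduct_map D (B X) (q1 X) (q2 X) (B Y) (q1 Y) (q2 Y) (snd F f) (snd G f)"
  using f by (simp add: biproduct_functor_def hom_def)

lemma biproduct_functor_star_functor: "star_functor C D (biproduct_functor C D F G B q1 q2)"
proof -
  note bpb = biproduct_functor_biproduct
  define M where "M f = biproduct_map D (B (c_dom C f)) (q1 (c_dom C f)) (q2 (c_dom C f))
    (B (c_cod C f)) (q1 (c_cod C f)) (q2 (c_cod C f)) (snd F f) (snd G f)" for f
  have M: "M f = biproduct_map D (B X) (q1 X) (q2 X) (B Y) (q1 Y) (q2 Y) (snd F f) (snd G f)"
    if "f \<in> hom C X Y" for f X Y
    using that M_def by (simp add: hom_def)
  show ?thesis
    unfolding biproduct_functor_def M_def[symmetric]
  proof (rule star_functorI)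
    fix X assume X: "X \<in> c_obj C"
    show "B X \<in> c_obj D" using Ds.hom_cod_obj[OF Ds.biproductD(1)[OF bpb[OF X]]] .
    show "M (c_id C X) = c_id D (B X)"
      using M[OF Cs.id_hom[OF X]] star_functor_id[OF F X] star_functor_id[OF G X]
        Ds.biproduct_map_id[OF bpb[OF X]] by simp
  next
    fix f X Y assume f: "f \<in> hom C X Y"
    note XY = Cs.hom_dom_obj[OF f] Cs.hom_cod_obj[OF f]
    note FG = star_functor_hom[OF F f] star_functor_hom[OF G f]
    show "M f \<in> hom D (B X) (B Y)" using Ds.biproduct_map(1)[OF bpb[OF XY(1)] bpb[OF XY(2)] FG] M[OF f] by simp
    show "M (c_star C f) = c_star D (M f)"
      using M[OF Cs.star_hom[OF f]] M[OF f] star_functor_star[OF F f] star_functor_star[OF G f]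
        Ds.biproduct_map_star[OF bp[OF XY(1)] bp[OF XY(2)] FG] by simp
  next
    fix f g X Y Z assume f: "f \<in> hom C X Y" and g: "g \<in> hom C Y Z"
    show "M (c_comp C g f) = c_comp D (M g) (M f)"
      using M[OF Cs.comp_hom[OF f g]] M[OF f] M[OF g] star_functor_comp[OF F f g] star_functor_comp[OF G f g]
        Ds.biproduct_map_comp[OF bpb[OF Cs.hom_dom_obj[OF f]] bpb[OF Cs.hom_cod_obj[OF f]]
          bpb[OF Cs.hom_cod_obj[OF g]] star_functor_hom[OF F f] star_functor_hom[OF G f]
          star_functor_hom[OF F g] star_functor_hom[OF G g]] by simp
  qed
qed

lemma biproduct_functor_proj:
  shows "(biproduct_functor C D F G B q1 q2, F, \<lambda>X\<in>c_obj C. q1 X) \<in> hom FC (biproduct_functor C D F G B q1 q2) F"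
    and "(biproduct_functor C D F G B q1 q2, G, \<lambda>X\<in>c_obj C. q2 X) \<in> hom FC (biproduct_functor C D F G B q1 q2) G"
proof -
  note bpb = biproduct_functor_biproduct
  have fst: "fst (biproduct_functor C D F G B q1 q2) X = B X" if "X \<in> c_obj C" for X
    using that by (simp add: biproduct_functor_def)
  have M: "c_comp D (q1 Y) (snd (biproduct_functor C D F G B q1 q2) f) = c_comp D (snd F f) (q1 X)"
    "c_comp D (q2 Y) (snd (biproduct_functor C D F G B q1 q2) f) = c_comp D (snd G f) (q2 X)"
    if f: "f \<in> hom C X Y" for f X Y
    using biproduct_functor_arr[OF f] Ds.biproduct_map(2,3)[OF bpb[OF Cs.hom_dom_obj[OF f]]
        bpb[OF Cs.hom_cod_obj[OF f]] star_functor_hom[OF F f] star_functor_hom[OF G f]] by simp_all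
  show "(biproduct_functor C D F G B q1 q2, F, \<lambda>X\<in>c_obj C. q1 X) \<in> hom FC (biproduct_functor C D F G B q1 q2) F"
    by (rule FC_homI[OF biproduct_functor_star_functor F]) (use Ds.biproductD(2)[OF bpb] fst M in auto)
  show "(biproduct_functor C D F G B q1 q2, G, \<lambda>X\<in>c_obj C. q2 X) \<in> hom FC (biproduct_functor C D F G B q1 q2) G"
    by (rule FC_homI[OF biproduct_functor_star_functor G]) (use Ds.biproductD(4)[OF bpb] fst M in auto)
qed


lemma biproduct_functor_pairing:
  assumes f1: "f1 \<in> hom FC W F" and f2: "f2 \<in> hom FC W G"
  shows "\<exists>!h. h \<in> hom FC W (biproduct_functor C D F G B q1 q2) \<and>
    c_comp FC (biproduct_functor C D F G B q1 q2, F, \<lambda>X\<in>c_obj C. q1 X) h = f1 \<and>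
    c_comp FC (biproduct_functor C D F G B q1 q2, G, \<lambda>X\<in>c_obj C. q2 X) h = f2"
proof (rule FC_factorization[OF biproduct_functor_proj f1 f2])
  fix X assume X: "X \<in> c_obj C"
  have B: "fst (biproduct_functor C D F G B q1 q2) X = B X" using X by (simp add: biproduct_functor_def)
  show "jointly_monic D (fst (biproduct_functor C D F G B q1 q2) X)
      (component (biproduct_functor C D F G B q1 q2, F, \<lambda>X\<in>c_obj C. q1 X) X)
      (component (biproduct_functor C D F G B q1 q2, G, \<lambda>X\<in>c_obj C. q2 X) X)"
    using Ds.biproduct_jointly_monic[OF biproduct_functor_biproduct[OF X]] B X by simp
  show "\<exists>h. h \<in> hom D (fst W X) (fst (biproduct_functor C D F G B q1 q2) X) \<and>
      c_comp D (component (biproduct_functor C D F G B q1 q2, F, \<lambda>X\<in>c_obj C. q1 X) X) h = component f1 X \<and>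
      c_comp D (component (biproduct_functor C D F G B q1 q2, G, \<lambda>X\<in>c_obj C. q2 X) X) h = component f2 X"
    using Ds.biproduct_pairing[OF biproduct_functor_biproduct[OF X] component_hom[OF f1 X] component_hom[OF f2 X]]
      B X by auto
qed
end

lemma kernel_components_stable:
  assumes s: "s \<in> hom FC F G" and f: "f \<in> hom C X Y"
    and kX: "is_kernel D (component s X) kX" and kY: "is_kernel D (component s Y) kY"
  shows "\<exists>h. h \<in> hom D (c_dom D kX) (c_dom D kY) \<and> c_comp D kY h = c_comp D (snd F f) kX"
proof -
  note XY = Cs.hom_dom_obj[OF f] Cs.hom_cod_obj[OF f]
  note Ff = star_functor_hom[OF FC_hom_functors(1)[OF s] f]
    and Gf = star_functor_hom[OF FC_hom_functors(2)[OF s] f]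
  note sX = component_hom[OF s XY(1)] and sY = component_hom[OF s XY(2)]
  note kXh = Ds.kernel_hom[OF kX sX]
  have "c_comp D (component s Y) (c_comp D (snd F f) kX) = c_comp D (snd G f) (c_comp D (component s X) kX)"
    using Ds.comp_assoc[OF kXh Ff sY] component_natural[OF s f] Ds.comp_assoc[OF kXh sX Gf] by simp
  moreover have "zero_arr D (c_comp D (snd G f) (c_comp D (component s X) kX))"
    using Ds.zero_arr_postcomp[OF _ Ds.comp_hom[OF kXh sX] Gf] kX unfolding is_kernel_def by blast
  ultimately show ?thesis
    using Ds.kernel_factor[OF kY sY Ds.comp_hom[OF kXh Ff]] by auto
qed

end

locale functor_category_pre_hilbert = functor_category +
  assumes pre_hilbert_D: "pre_hilbert D"
begin

lemma zero_obj_D: "\<exists>Z. zero_obj D Z"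
  using pre_hilbert_D unfolding pre_hilbert_def by blast

lemma FC_kernelI:
  assumes s: "s \<in> hom FC F G" and k: "k \<in> hom FC K F"
    and pointwise: "\<And>X. X \<in> c_obj C \<Longrightarrow> is_kernel D (component s X) (component k X)"
  shows "is_kernel FC s k"
proof -
  obtain Z where Z: "zero_obj D Z" using zero_obj_D by blast
  have zero: "zero_arr FC (c_comp FC s k)"
    using pointwise FC_zero_arr_iff[OF Z FCs.comp_hom[OF k s]] component_comp
    unfolding is_kernel_def by simp
  have univ: "\<exists>!h. h \<in> hom FC (c_dom FC g) (c_dom FC k) \<and> c_comp FC k h = g"
    if g: "g \<in> c_arr FC" "c_cod FC g = c_dom FC s" "zero_arr FC (c_comp FC s g)" for g
  proof -
    define W where "W = c_dom FC g"
    have gh: "g \<in> hom FC W F" using g FCs.hom_dom[OF s] unfolding W_def by (simp add: hom_def)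
    have "\<exists>!h. h \<in> hom FC W K \<and> c_comp FC k h = g \<and> c_comp FC k h = g"
    proof (rule FC_factorization[OF k k gh gh])
      fix X assume X: "X \<in> c_obj C"
      have dk: "c_dom D (component k X) = fst K X" using Ds.hom_dom[OF component_hom[OF k X]] .
      show "jointly_monic D (fst K X) (component k X) (component k X)"
        using Ds.kernel_jointly_monic[OF pointwise[OF X] component_hom[OF s X]] dk by simp
      have "zero_arr D (component (c_comp FC s g) X)"
        using g(3) FC_zero_arr_iff[OF Z FCs.comp_hom[OF gh s]] X by blast
      then have "zero_arr D (c_comp D (component s X) (component g X))"
        using component_comp[OF X] by simp
      then show "\<exists>h. h \<in> hom D (fst W X) (fst K X) \<and>
          c_comp D (component k X) h = component g X \<and> c_comp D (component k X) h = component g X"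
        using Ds.kernel_factor[OF pointwise[OF X] component_hom[OF s X] component_hom[OF gh X]] dk by auto
    qed
    then show ?thesis using FCs.hom_dom[OF k] W_def by simp
  qed
  show ?thesis unfolding is_kernel_def
    using FCs.hom_arr[OF s] FCs.hom_arr[OF k] FCs.hom_cod[OF k] FCs.hom_dom[OF s] zero univ by simp
qed

lemma FC_isometric_kernel:
  assumes s: "s \<in> hom FC F G"
  obtains k where "is_kernel FC s k" "isometry FC k"
    "\<And>X. X \<in> c_obj C \<Longrightarrow> is_kernel D (component s X) (component k X)"
proof -
  note F = FC_hom_functors(1)[OF s]
  have "\<forall>X\<in>c_obj C. \<exists>k. is_kernel D (component s X) k \<and> isometry D k"
    using pre_hilbert_D Ds.hom_arr[OF component_hom[OF s]] unfolding pre_hilbert_def by blast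
  then obtain \<kappa> where \<kappa>: "\<And>X. X \<in> c_obj C \<Longrightarrow> is_kernel D (component s X) (\<kappa> X)"
    and iso: "\<And>X. X \<in> c_obj C \<Longrightarrow> isometry D (\<kappa> X)"
    by metis
  have cod: "c_cod D (\<kappa> X) = fst F X" if "X \<in> c_obj C" for X
    using Ds.hom_cod[OF Ds.kernel_hom[OF \<kappa>[OF that] component_hom[OF s that]]] .
  have stable: "\<exists>h. h \<in> hom D (c_dom D (\<kappa> X)) (c_dom D (\<kappa> Y)) \<and>
      c_comp D (\<kappa> Y) h = c_comp D (snd F f) (\<kappa> X)" if f: "f \<in> hom C X Y" for f X Y
    using kernel_components_stable[OF s f \<kappa>[OF Cs.hom_dom_obj[OF f]] \<kappa>[OF Cs.hom_cod_obj[OF f]]] .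
  let ?k = "(subfunctor C D F \<kappa>, F, \<lambda>X\<in>c_obj C. \<kappa> X)"
  have "?k \<in> hom FC (subfunctor C D F \<kappa>) F" using F iso cod stable by (rule subfunctor_incl)
  moreover have "isometry FC ?k" using F iso cod stable by (rule subfunctor_incl_isometry)
  moreover have pointwise: "is_kernel D (component s X) (component ?k X)" if "X \<in> c_obj C" for X
    using \<kappa>[OF that] that by simp
  ultimately show thesis using that FC_kernelI[OF s] by blast
qed

lemma biproduct_functor_orthonormal_biproduct:
  assumes F: "star_functor C D F" and G: "star_functor C D G"
    and bp: "\<And>X. X \<in> c_obj C \<Longrightarrow> orthonormal_biproduct D (fst F X) (fst G X) (B X)
      (c_star D (q1 X)) (q1 X) (c_star D (q2 X)) (q2 X)"
    and r1: "r1 = (biproduct_functor C D F G B q1 q2, F, \<lambda>X\<in>c_obj C. q1 X)"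
    and r2: "r2 = (biproduct_functor C D F G B q1 q2, G, \<lambda>X\<in>c_obj C. q2 X)"
  shows "orthonormal_biproduct FC F G (biproduct_functor C D F G B q1 q2) (c_star FC r1) r1 (c_star FC r2) r2"
proof -
  let ?H = "biproduct_functor C D F G B q1 q2"
  have bpb: "biproduct D (fst F X) (fst G X) (B X) (c_star D (q1 X)) (q1 X) (c_star D (q2 X)) (q2 X)"
    if "X \<in> c_obj C" for X
    using bp[OF that] unfolding orthonormal_biproduct_def by blast
  have r: "r1 \<in> hom FC ?H F" "r2 \<in> hom FC ?H G"
    using biproduct_functor_proj[OF F G] bp unfolding r1 r2 by blast+
  note s = FCs.star_hom[OF r(1)] FCs.star_hom[OF r(2)]
  have cr [simp]: "component r1 X = q1 X" "component r2 X = q2 X" if "X \<in> c_obj C" for X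
    using that r1 r2 by simp_all
  obtain Z where Z: "zero_obj D Z" using zero_obj_D by blast
  show ?thesis
  proof (rule FCs.orthonormal_biproductI[OF s])
    show "r1 = c_star FC (c_star FC r1)" "r2 = c_star FC (c_star FC r2)"
      using FCs.star_star r by simp_all
    show "c_comp FC r1 (c_star FC r1) = c_id FC F"
    proof (rule FC_arr_eqI[OF FCs.comp_hom[OF s(1) r(1)] FC_id_hom[OF F]])
      fix X assume X: "X \<in> c_obj C"
      show "component (c_comp FC r1 (c_star FC r1)) X = component (c_id FC F) X"
        using Ds.biproductD(5)[OF bpb[OF X]] X
        by (simp add: component_comp[OF X] component_star[OF X] component_id[OF X])
    qed
    show "c_comp FC r2 (c_star FC r2) = c_id FC G"
    proof (rule FC_arr_eqI[OF FCs.comp_hom[OF s(2) r(2)] FC_id_hom[OF G]])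
      fix X assume X: "X \<in> c_obj C"
      show "component (c_comp FC r2 (c_star FC r2)) X = component (c_id FC G) X"
        using Ds.biproductD(6)[OF bpb[OF X]] X
        by (simp add: component_comp[OF X] component_star[OF X] component_id[OF X])
    qed
    show "zero_arr FC (c_comp FC r2 (c_star FC r1))" "zero_arr FC (c_comp FC r1 (c_star FC r2))"
      using FC_zero_arr_iff[OF Z FCs.comp_hom[OF s(1) r(2)]] FC_zero_arr_iff[OF Z FCs.comp_hom[OF s(2) r(1)]]
        Ds.biproductD(7,8)[OF bpb] by (simp_all add: component_comp component_star)
    fix W f1 f2 assume "f1 \<in> hom FC W F" "f2 \<in> hom FC W G"
    with F G bp show "\<exists>!h. h \<in> hom FC W ?H \<and> c_comp FC r1 h = f1 \<and> c_comp FC r2 h = f2"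
      unfolding r1 r2 by (rule biproduct_functor_pairing)
  qed
qed

lemma FC_biproduct:
  assumes F: "star_functor C D F" and G: "star_functor C D G"
  obtains H r1 r2 where "orthonormal_biproduct FC F G H (c_star FC r1) r1 (c_star FC r2) r2"
    "\<And>X. X \<in> c_obj C \<Longrightarrow> orthonormal_biproduct D (fst F X) (fst G X) (fst H X)
        (c_star D (component r1 X)) (component r1 X) (c_star D (component r2 X)) (component r2 X)"
proof -
  have "\<exists>P q1 q2. orthonormal_biproduct D (fst F X) (fst G X) P (c_star D q1) q1 (c_star D q2) q2"
    if X: "X \<in> c_obj C" for X
  proof -
    obtain P s1 r1 s2 r2 where "orthonormal_biproduct D (fst F X) (fst G X) P s1 r1 s2 r2"
      using pre_hilbert_D star_functor_obj[OF F X] star_functor_obj[OF G X]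
      unfolding pre_hilbert_def by blast
    moreover have "s1 = c_star D r1" "s2 = c_star D r2"
      using calculation Ds.star_star Ds.biproductD(1,3)
      unfolding orthonormal_biproduct_def by metis+
    ultimately show ?thesis by blast
  qed
  then obtain B q1 q2 where bp: "\<And>X. X \<in> c_obj C \<Longrightarrow> orthonormal_biproduct D (fst F X) (fst G X)
      (B X) (c_star D (q1 X)) (q1 X) (c_star D (q2 X)) (q2 X)"
    by metis
  let ?H = "biproduct_functor C D F G B q1 q2"
  have "orthonormal_biproduct D (fst F X) (fst G X) (fst ?H X)
      (c_star D (component (?H, F, \<lambda>X\<in>c_obj C. q1 X) X)) (component (?H, F, \<lambda>X\<in>c_obj C. q1 X) X)
      (c_star D (component (?H, G, \<lambda>X\<in>c_obj C. q2 X) X)) (component (?H, G, \<lambda>X\<in>c_obj C. q2 X) X)"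
    if "X \<in> c_obj C" for X
    using bp[OF that] that by (simp add: biproduct_functor_def)
  then show thesis
    using that biproduct_functor_orthonormal_biproduct[OF F G bp refl refl] by blast
qed

lemma FC_normal_mono_of_components:
  assumes d: "d \<in> hom FC F P" and normal: "\<And>X. X \<in> c_obj C \<Longrightarrow> normal_mono D (component d X)"
  shows "normal_mono FC d"
proof -
  obtain k where k: "\<And>X. X \<in> c_obj C \<Longrightarrow> is_kernel D (component (c_star FC d) X) (component k X)"
    and kh: "is_kernel FC (c_star FC d) k"
    using FC_isometric_kernel[OF FCs.star_hom[OF d]] by metis
  have "k \<in> hom FC (c_dom FC k) P"
    using FCs.kernel_hom[OF kh FCs.star_hom[OF d]] .
  moreover have "is_kernel D (component (c_star FC k) X) (component d X)" if X: "X \<in> c_obj C" for X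
    using Ds.normal_mono_kernel_of_adjoint[OF normal[OF X]] k[OF X] component_star[OF X] by simp
  ultimately have "is_kernel FC (c_star FC k) d"
    using FC_kernelI FCs.star_hom d by blast
  then show ?thesis unfolding normal_mono_def by blast
qed

lemma FC_diagonal_component_normal_mono:
  assumes F: "star_functor C D F" and P: "biproduct FC F F P s1 r1 s2 r2"
    and d: "d \<in> hom FC F P" and d1: "c_comp FC r1 d = c_id FC F" and d2: "c_comp FC r2 d = c_id FC F"
    and X: "X \<in> c_obj C"
  shows "normal_mono D (component d X)"
proof -
  obtain Q q1 q2 where Q: "orthonormal_biproduct FC F F Q (c_star FC q1) q1 (c_star FC q2) q2"
    and QX: "orthonormal_biproduct D (fst F X) (fst F X) (fst Q X)
        (c_star D (component q1 X)) (component q1 X) (c_star D (component q2 X)) (component q2 X)"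
    using FC_biproduct[OF F F] X by metis
  obtain \<phi> \<psi> where \<phi>: "\<phi> \<in> hom FC P Q" and \<psi>: "\<psi> \<in> hom FC Q P"
    and \<psi>\<phi>: "c_comp FC \<psi> \<phi> = c_id FC P" and \<phi>\<psi>: "c_comp FC \<phi> \<psi> = c_id FC Q"
    and q\<phi>: "c_comp FC q1 \<phi> = r1" "c_comp FC q2 \<phi> = r2"
    using FCs.biproduct_iso[OF P] Q unfolding orthonormal_biproduct_def by metis
  note q = FCs.biproductD(2,4)[OF Q[unfolded orthonormal_biproduct_def, THEN conjunct1]]
  note dX = component_hom[OF d X] and \<phi>X = component_hom[OF \<phi> X] and \<psi>X = component_hom[OF \<psi> X]
  \<comment> \<open>transported along \<open>\<phi>\<close>, the component of \<open>d\<close> is a diagonal of the pointwise biproduct\<close>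
  have diag: "c_comp D (component qi X) (c_comp D (component \<phi> X) (component d X)) = c_id D (fst F X)"
    if "qi \<in> hom FC Q F" "c_comp FC (c_comp FC qi \<phi>) d = c_id FC F" for qi
    using that component_comp[OF X] component_id[OF X] Ds.comp_assoc[OF dX \<phi>X component_hom[OF that(1) X]]
    by metis
  have "normal_mono D (c_comp D (component \<phi> X) (component d X))"
    using pre_hilbert_D star_functor_obj[OF F X] QX Ds.comp_hom[OF dX \<phi>X]
      diag[OF q(1)] diag[OF q(2)] q\<phi> d1 d2
    unfolding pre_hilbert_def by blast
  moreover have \<psi>\<phi>X: "c_comp D (component \<psi> X) (component \<phi> X) = c_id D (fst P X)"
    and "c_comp D (component \<phi> X) (component \<psi> X) = c_id D (fst Q X)"
    using component_comp[OF X, of \<psi> \<phi>] component_comp[OF X, of \<phi> \<psi>] \<psi>\<phi> \<phi>\<psi> component_id[OF X]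
    by simp_all
  ultimately have "normal_mono D (c_comp D (component \<psi> X) (c_comp D (component \<phi> X) (component d X)))"
    using Ds.normal_mono_iso_comp Ds.comp_hom[OF dX \<phi>X] \<phi>X \<psi>X by blast
  then show ?thesis using Ds.comp_assoc[OF dX \<phi>X \<psi>X] \<psi>\<phi>X Ds.id_comp[OF dX] by simp
qed

lemma FC_diagonal_normal_mono:
  assumes F: "F \<in> c_obj FC" and P: "orthonormal_biproduct FC F F P s1 r1 s2 r2"
    and d: "d \<in> hom FC F P" and d1: "c_comp FC r1 d = c_id FC F" and d2: "c_comp FC r2 d = c_id FC F"
  shows "normal_mono FC d"
  using FC_normal_mono_of_components[OF d] FC_diagonal_component_normal_mono[OF _ _ d d1 d2]
    F P FC_obj_iff unfolding orthonormal_biproduct_def by blast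

end

theorem proposition2p5:
  fixes C :: "('o1, 'a1) star_cat" and D :: "('o2, 'a2) star_cat"
  assumes "star_category C" and "star_category D" and "pre_hilbert D"
  shows "pre_hilbert (functor_star_cat C D)"
proof -
  interpret functor_category_pre_hilbert C D
    using assms by (simp add: functor_category_pre_hilbert_def functor_category_def
        functor_category_pre_hilbert_axioms_def)
  obtain Z where "zero_obj D Z" using zero_obj_D by blast
  then have "zero_obj FC (const_functor C D Z)" by (rule zero_obj_const_functor)
  moreover have "\<exists>P s1 r1 s2 r2. orthonormal_biproduct FC F G P s1 r1 s2 r2"
    if "F \<in> c_obj FC" "G \<in> c_obj FC" for F G
    using FC_biproduct that FC_obj_iff by metis
  moreover have "\<exists>k. is_kernel FC s k \<and> isometry FC k" if "s \<in> c_arr FC" for s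
    using FC_isometric_kernel FCs.arr_hom[OF that] by metis
  ultimately show ?thesis
    unfolding pre_hilbert_def using FC_star_category FC_diagonal_normal_mono by blast
qed

end
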